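(* Let $A=S_{\mathbf q}(V)$, let $K_\bullet$ be its Koszul resolution and $B_\bullet(A)$ its normalized bar resolution. Define $A$-bimodule maps $\Phi_p\colon K_p\to B_p(A)$ by $$\Phi_p(1\otimes(x_{j_1}\wedge\cdots\wedge x_{j_p})\otimes1)=\sum_{\pi\in\mathrm{Sym}_p}\mathrm{sgn}(\pi)\,q_\pi^{j_1,\dots,j_p}\otimes x_{j_{\pi(1)}}\otimes\cdots\otimes x_{j_{\pi(p)}}\otimes1\quad(1\le j_1<\cdots<j_p\le N),$$ and $A$-bimodule maps $\Psi_p\colon B_p(A)\to K_p$ by $\Psi_0=\mathrm{Id}$ and, for $p\ge1$ and $\underline{\ell}^1,\dots,\underline{\ell}^p\in\mathbb{N}^N$, $$\Psi_p(1\otimes\underline{x}^{\underline{\ell}^1}\otimes\cdots\otimes\underline{x}^{\underline{\ell}^p}\otimes1)=\sum_{1\le j_1<\cdots<j_p\le N}\ \sum_{\substack{0\le r_s\le\ell^s_{j_s}-1\\ s=1,\dots,p}}\mu\ \underline{x}^{\underline{Q}}\otimes(x_{j_1}\wedge\cdots\wedge x_{j_p})\otimes\underline{x}^{\widehat{\underline{Q}}},$$ where $\underline{Q}=\underline{Q}^{(\underline{\ell}^1,\dots,\underline{\ell}^p;j_1,\dots,j_p)}_{(r_1,\dots,r_p)}\in\mathbb{N}^N$ is given (with $j_0=0$, $j_{p+1}=N+1$) by $\underline{Q}_j=r_s+\ell^1_j+\cdots+\ell^{s-1}_j$ if $j=j_s$ ($1\le s\le p$) and $\underline{Q}_j=\ell^1_j+\cdots+\ell^s_j$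 if $j_s<j<j_{s+1}$ ($0\le s\le p$); $\widehat{\underline{Q}}=\underline{\ell}^1+\cdots+\underline{\ell}^p-\underline{Q}-\sum_{s=1}^pe_{j_s}\in\mathbb{N}^N$; and $\mu\in\mathbb{k}^\times$ is the unique scalar with $\mu\,\underline{x}^{\underline{Q}}x_{j_1}\cdots x_{j_p}\underline{x}^{\widehat{\underline{Q}}}=\underline{x}^{\underline{\ell}^1}\cdots\underline{x}^{\underline{\ell}^p}$ in $S_{\mathbf q}(V)$. Then (i) $\Phi_\bullet$ is a chain map from $K_\bullet$ to $B_\bullet(A)$ lifting the identity of $A$; (ii) $\Psi_\bullet$ is a chain map from $B_\bullet(A)$ to $K_\bullet$ lifting the identity of $A$; (iii) $\Psi_\bullet\circ\Phi_\bullet$ is the identity map of $K_\bullet$.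
   Context: $\mathbb{k}$ is a field, $\mathbf q=(q_{i,j})$ nonzero scalars with $q_{i,i}=1$, $q_{j,i}=q_{i,j}^{-1}$, and $S_{\mathbf q}(V)=\mathbb{k}\langle x_1,\dots,x_N\mid x_ix_j=q_{i,j}x_jx_i\rangle$, with $\mathbb{k}$-basis the ordered monomials $\underline{x}^{\underline{\ell}}=x_1^{\ell_1}\cdots x_N^{\ell_N}$. $e_u\in\mathbb{N}^N$ is the $u$-th standard basis vector. The Koszul resolution $K_\bullet$: $K_p=A\otimes\bigwedge^p(V)\otimes A$ with $A$-bimodule basis $1\otimes(x_{j_1}\wedge\cdots\wedge x_{j_p})\otimes1$ ($j_1<\cdots<j_p$), $d_0$ multiplication, and $d_p(1\otimes(x_{j_1}\wedge\cdots\wedge x_{j_p})\otimes1)=\sum_{i=1}^p(-1)^{i+1}(\prod_{s=1}^iq_{j_s,j_i})x_{j_i}\otimes(x_{j_1}\wedge\cdots\widehat{x_{j_i}}\cdots\wedge x_{j_p})\otimes1-\sum_{i=1}^p(-1)^{i+1}(\prod_{s=i}^pq_{j_i,j_s})1\otimes(x_{j_1}\wedge\cdots\widehat{x_{j_i}}\cdots\wedge x_{j_p})\otimes x_{j_i}$. The normalized bar resolution: $\overline{A}=A/\mathbb{k}1$, $B_p(A)=A\otimes\overline{A}^{\otimes p}\otimes A$, with $\delta_p(a_0\otimes a_1\otimes\cdots\otimes a_p\otimes a_{p+1})=\sum_{i=0}^p(-1)^ia_0\otimes\cdots\otimes a_ia_{i+1}\otimes\cdots\otimes a_{p+1}$ (elements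 of $\overline A$ written by representatives). For $\pi\in\mathrm{Sym}_p$, the scalar $q_\pi^{j_1,\dots,j_p}$ is defined by $q_\pi^{j_1,\dots,j_p}x_{j_{\pi(1)}}\cdots x_{j_{\pi(p)}}=x_{j_1}\cdots x_{j_p}$ in $S_{\mathbf q}(V)$. (If some $\underline{\ell}^s=0$ the inner sum defining $\Psi_p$ is empty, so $\Psi_p$ is well defined on $\overline A$.) *)

theory Defs
  imports "HOL-Combinatorics.Permutations"
begin

definition supp :: "('b \<Rightarrow> 'k::zero) \<Rightarrow> 'b set" where
  "supp v = {x. v x \<noteq> 0}"

definition vsingle :: "'b \<Rightarrow> 'k::zero \<Rightarrow> 'b \<Rightarrow> 'k" where
  "vsingle x c = (\<lambda>y. if y = x then c else 0)"

definition vsmult :: "'k::times \<Rightarrow> ('b \<Rightarrow> 'k) \<Rightarrow> 'b \<Rightarrow> 'k" where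
  "vsmult c v = (\<lambda>y. c * v y)"

definition lin_ext :: "('b \<Rightarrow> 'c \<Rightarrow> 'k::comm_ring_1) \<Rightarrow> ('b \<Rightarrow> 'k) \<Rightarrow> 'c \<Rightarrow> 'k" where
  "lin_ext f v = (\<lambda>y. \<Sum>x\<in>supp v. v x * f x y)"

definition vecs :: "'b set \<Rightarrow> ('b \<Rightarrow> 'k::zero) \<Rightarrow> bool" where
  "vecs S v \<longleftrightarrow> finite (supp v) \<and> supp v \<subseteq> S"

section \<open>The quantum affine space S_q(V) with basis the ordered monomials\<close>

definition expvecs :: "nat \<Rightarrow> (nat \<Rightarrow> nat) set" where
  "expvecs N = {l. \<forall>j. j \<notin> {1..N} \<longrightarrow> l j = 0}"

definition mzero :: "nat \<Rightarrow> nat" where "mzero = (\<lambda>_. 0)"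

definition madd :: "(nat \<Rightarrow> nat) \<Rightarrow> (nat \<Rightarrow> nat) \<Rightarrow> nat \<Rightarrow> nat" where
  "madd a b = (\<lambda>j. a j + b j)"

definition unitv :: "nat \<Rightarrow> nat \<Rightarrow> nat" where
  "unitv u = (\<lambda>j. if j = u then 1 else 0)"

text \<open>x^a x^b = mcoef a b * x^(a+b), from x_i x_j = q_{i,j} x_j x_i.\<close>
definition mcoef :: "(nat \<Rightarrow> nat \<Rightarrow> 'k::comm_ring_1) \<Rightarrow> nat \<Rightarrow> (nat \<Rightarrow> nat) \<Rightarrow> (nat \<Rightarrow> nat) \<Rightarrow> 'k" where
  "mcoef q N a b = (\<Prod>i\<in>{1..N}. \<Prod>j\<in>{1..<i}. q i j ^ (a i * b j))"

definition amul :: "(nat \<Rightarrow> nat \<Rightarrow> 'k::comm_ring_1) \<Rightarrow> nat \<Rightarrow>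
    ((nat \<Rightarrow> nat) \<Rightarrow> 'k) \<Rightarrow> ((nat \<Rightarrow> nat) \<Rightarrow> 'k) \<Rightarrow> (nat \<Rightarrow> nat) \<Rightarrow> 'k" where
  "amul q N u v = lin_ext (\<lambda>a. lin_ext (\<lambda>b. vsingle (madd a b) (mcoef q N a b)) v) u"

text \<open>The ordered monomial x^l = x_1^{l_1}...x_N^{l_N}.\<close>
definition mon :: "(nat \<Rightarrow> nat) \<Rightarrow> (nat \<Rightarrow> nat) \<Rightarrow> 'k::zero_neq_one" where
  "mon l = vsingle l 1"

definition Aone :: "(nat \<Rightarrow> nat) \<Rightarrow> 'k::zero_neq_one" where
  "Aone = mon mzero"

definition xgen :: "nat \<Rightarrow> (nat \<Rightarrow> nat) \<Rightarrow> 'k::zero_neq_one" where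
  "xgen j = mon (unitv j)"

definition word :: "(nat \<Rightarrow> nat \<Rightarrow> 'k::comm_ring_1) \<Rightarrow> nat \<Rightarrow> nat list \<Rightarrow> (nat \<Rightarrow> nat) \<Rightarrow> 'k" where
  "word q N w = foldr (\<lambda>j acc. amul q N (xgen j) acc) w Aone"

definition monprod :: "(nat \<Rightarrow> nat \<Rightarrow> 'k::comm_ring_1) \<Rightarrow> nat \<Rightarrow> (nat \<Rightarrow> nat) list \<Rightarrow> (nat \<Rightarrow> nat) \<Rightarrow> 'k" where
  "monprod q N ls = foldr (\<lambda>l acc. amul q N (mon l) acc) ls Aone"

section \<open>A-bimodules A \<otimes> W \<otimes> A (basis triples (a, w, b) = x^a \<otimes> w \<otimes> x^b)\<close>

definition lact :: "(nat \<Rightarrow> nat \<Rightarrow> 'k::comm_ring_1) \<Rightarrow> nat \<Rightarrow> (nat \<Rightarrow> nat) \<Rightarrow>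
    ((nat \<Rightarrow> nat) \<times> 'w \<times> (nat \<Rightarrow> nat) \<Rightarrow> 'k) \<Rightarrow> (nat \<Rightarrow> nat) \<times> 'w \<times> (nat \<Rightarrow> nat) \<Rightarrow> 'k" where
  "lact q N a u = lin_ext (\<lambda>(c, w, d). vsingle (madd a c, w, d) (mcoef q N a c)) u"

definition ract :: "(nat \<Rightarrow> nat \<Rightarrow> 'k::comm_ring_1) \<Rightarrow> nat \<Rightarrow>
    ((nat \<Rightarrow> nat) \<times> 'w \<times> (nat \<Rightarrow> nat) \<Rightarrow> 'k) \<Rightarrow> (nat \<Rightarrow> nat) \<Rightarrow> (nat \<Rightarrow> nat) \<times> 'w \<times> (nat \<Rightarrow> nat) \<Rightarrow> 'k" where
  "ract q N u b = lin_ext (\<lambda>(c, w, d). vsingle (c, w, madd d b) (mcoef q N d b)) u"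

text \<open>The A-bimodule map A \<otimes> W \<otimes> A \<rightarrow> A \<otimes> W' \<otimes> A determined by the images g w of the generators 1 \<otimes> w \<otimes> 1.\<close>
definition bimod_ext :: "(nat \<Rightarrow> nat \<Rightarrow> 'k::comm_ring_1) \<Rightarrow> nat \<Rightarrow>
    ('w \<Rightarrow> (nat \<Rightarrow> nat) \<times> 'w2 \<times> (nat \<Rightarrow> nat) \<Rightarrow> 'k) \<Rightarrow>
    ((nat \<Rightarrow> nat) \<times> 'w \<times> (nat \<Rightarrow> nat) \<Rightarrow> 'k) \<Rightarrow> (nat \<Rightarrow> nat) \<times> 'w2 \<times> (nat \<Rightarrow> nat) \<Rightarrow> 'k" where
  "bimod_ext q N g v = lin_ext (\<lambda>(a, w, b). lact q N a (ract q N (g w) b)) v"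

text \<open>Basis of K_p: x^a \<otimes> (x_{j_1} \<and> ... \<and> x_{j_p}) \<otimes> x^b, with js = [j_1,...,j_p] strictly increasing.\<close>
definition Kbasis :: "nat \<Rightarrow> nat \<Rightarrow> ((nat \<Rightarrow> nat) \<times> nat list \<times> (nat \<Rightarrow> nat)) set" where
  "Kbasis N p = {(a, js, b). a \<in> expvecs N \<and> b \<in> expvecs N \<and> length js = p \<and>
                   sorted_wrt (<) js \<and> set js \<subseteq> {1..N}}"

definition del_at :: "nat \<Rightarrow> 'a list \<Rightarrow> 'a list" where
  "del_at i xs = take i xs @ drop (Suc i) xs"

text \<open>d_p on generators (0-based index i corresponds to the paper's i+1).\<close>
definition dK_gen :: "(nat \<Rightarrow> nat \<Rightarrow> 'k::comm_ring_1) \<Rightarrow> nat list \<Rightarrow>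
    (nat \<Rightarrow> nat) \<times> nat list \<times> (nat \<Rightarrow> nat) \<Rightarrow> 'k" where
  "dK_gen q js = (\<lambda>y.
     (\<Sum>i<length js. (-1) ^ i * (\<Prod>s\<in>{0..i}. q (js ! s) (js ! i)) *
          vsingle (unitv (js ! i), del_at i js, mzero) 1 y)
   - (\<Sum>i<length js. (-1) ^ i * (\<Prod>s\<in>{i..<length js}. q (js ! i) (js ! s)) *
          vsingle (mzero, del_at i js, unitv (js ! i)) 1 y))"

definition dK :: "(nat \<Rightarrow> nat \<Rightarrow> 'k::comm_ring_1) \<Rightarrow> nat \<Rightarrow>
    ((nat \<Rightarrow> nat) \<times> nat list \<times> (nat \<Rightarrow> nat) \<Rightarrow> 'k) \<Rightarrow> (nat \<Rightarrow> nat) \<times> nat list \<times> (nat \<Rightarrow> nat) \<Rightarrow> 'k" where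
  "dK q N v = bimod_ext q N (dK_gen q) v"

text \<open>d_0 : K_0 = A \<otimes> A \<rightarrow> A, multiplication.\<close>
definition epsK :: "(nat \<Rightarrow> nat \<Rightarrow> 'k::comm_ring_1) \<Rightarrow> nat \<Rightarrow>
    ((nat \<Rightarrow> nat) \<times> nat list \<times> (nat \<Rightarrow> nat) \<Rightarrow> 'k) \<Rightarrow> (nat \<Rightarrow> nat) \<Rightarrow> 'k" where
  "epsK q N v = lin_ext (\<lambda>(a, js, b). amul q N (mon a) (mon b)) v"

text \<open>Basis of B_p(A): x^{a_0} \<otimes> x^{l_1} \<otimes> ... \<otimes> x^{l_p} \<otimes> x^{a_{p+1}}, the l_s nonconstant
  (basis of \<open>A/k1\<close>).\<close>
definition Bbasis :: "nat \<Rightarrow> nat \<Rightarrow> ((nat \<Rightarrow> nat) \<times> (nat \<Rightarrow> nat) list \<times> (nat \<Rightarrow> nat)) set" where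
  "Bbasis N p = {(a, ls, b). a \<in> expvecs N \<and> b \<in> expvecs N \<and> length ls = p \<and>
                   (\<forall>l\<in>set ls. l \<in> expvecs N \<and> l \<noteq> mzero)}"

definition bar_of_list :: "'a list \<Rightarrow> 'a \<times> 'a list \<times> 'a" where
  "bar_of_list L = (hd L, butlast (tl L), last L)"

definition deltaB :: "(nat \<Rightarrow> nat \<Rightarrow> 'k::comm_ring_1) \<Rightarrow> nat \<Rightarrow>
    ((nat \<Rightarrow> nat) \<times> (nat \<Rightarrow> nat) list \<times> (nat \<Rightarrow> nat) \<Rightarrow> 'k) \<Rightarrow>
    (nat \<Rightarrow> nat) \<times> (nat \<Rightarrow> nat) list \<times> (nat \<Rightarrow> nat) \<Rightarrow> 'k" where
  "deltaB q N v = lin_ext (\<lambda>(a, ls, b). let L = a # ls @ [b] in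
     (\<lambda>y. \<Sum>i\<le>length ls. (-1) ^ i * mcoef q N (L ! i) (L ! Suc i) *
        vsingle (bar_of_list (take i L @ [madd (L ! i) (L ! Suc i)] @ drop (Suc (Suc i)) L)) 1 y)) v"

text \<open>\<delta>_0 : B_0(A) = A \<otimes> A \<rightarrow> A, multiplication.\<close>
definition epsB :: "(nat \<Rightarrow> nat \<Rightarrow> 'k::comm_ring_1) \<Rightarrow> nat \<Rightarrow>
    ((nat \<Rightarrow> nat) \<times> (nat \<Rightarrow> nat) list \<times> (nat \<Rightarrow> nat) \<Rightarrow> 'k) \<Rightarrow> (nat \<Rightarrow> nat) \<Rightarrow> 'k" where
  "epsB q N v = lin_ext (\<lambda>(a, ls, b). amul q N (mon a) (mon b)) v"

text \<open>q_\<pi>^{j_1..j_p}: q_\<pi> x_{j_\<pi>(1)} ... x_{j_\<pi>(p)} = x_{j_1} ... x_{j_p} (0-based indices).\<close>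
definition qperm :: "(nat \<Rightarrow> nat \<Rightarrow> 'k::field) \<Rightarrow> nat \<Rightarrow> nat list \<Rightarrow> (nat \<Rightarrow> nat) \<Rightarrow> 'k" where
  "qperm q N js \<pi> = (THE c. vsmult c (word q N (map (\<lambda>k. js ! \<pi> k) [0..<length js])) = word q N js)"

definition Phi_gen :: "(nat \<Rightarrow> nat \<Rightarrow> 'k::field) \<Rightarrow> nat \<Rightarrow> nat list \<Rightarrow>
    (nat \<Rightarrow> nat) \<times> (nat \<Rightarrow> nat) list \<times> (nat \<Rightarrow> nat) \<Rightarrow> 'k" where
  "Phi_gen q N js = (\<lambda>y. \<Sum>\<pi>\<in>{\<pi>. \<pi> permutes {0..<length js}}.
      of_int (sign \<pi>) * qperm q N js \<pi> *
      vsingle (mzero, map (\<lambda>k. unitv (js ! \<pi> k)) [0..<length js], mzero) 1 y)"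

definition Phi :: "(nat \<Rightarrow> nat \<Rightarrow> 'k::field) \<Rightarrow> nat \<Rightarrow>
    ((nat \<Rightarrow> nat) \<times> nat list \<times> (nat \<Rightarrow> nat) \<Rightarrow> 'k) \<Rightarrow>
    (nat \<Rightarrow> nat) \<times> (nat \<Rightarrow> nat) list \<times> (nat \<Rightarrow> nat) \<Rightarrow> 'k" where
  "Phi q N v = bimod_ext q N (Phi_gen q N) v"

definition incseqs :: "nat \<Rightarrow> nat \<Rightarrow> nat list set" where
  "incseqs N p = {js. length js = p \<and> sorted_wrt (<) js \<and> set js \<subseteq> {1..N}}"

definition rsets :: "(nat \<Rightarrow> nat) list \<Rightarrow> nat list \<Rightarrow> nat list set" where
  "rsets ls js = {rs. length rs = length js \<and> (\<forall>s<length js. rs ! s < (ls ! s) (js ! s))}"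

text \<open>Q: with s = #{i. j_i < j} (0-based), Q_j = r_s + l^1_j+...+l^s_j if j = j_{s+1} (paper's
  1-based index), and Q_j = l^1_j+...+l^s_j if j_s < j < j_{s+1}.\<close>
definition Qvec :: "(nat \<Rightarrow> nat) list \<Rightarrow> nat list \<Rightarrow> nat list \<Rightarrow> nat \<Rightarrow> nat" where
  "Qvec ls js rs = (\<lambda>j. let s = card {i. i < length js \<and> js ! i < j} in
      (if j \<in> set js then rs ! s else 0) + (\<Sum>t<s. (ls ! t) j))"

definition Qhat :: "(nat \<Rightarrow> nat) list \<Rightarrow> nat list \<Rightarrow> nat list \<Rightarrow> nat \<Rightarrow> nat" where
  "Qhat ls js rs = (\<lambda>j. (\<Sum>t<length ls. (ls ! t) j) - Qvec ls js rs j - (if j \<in> set js then 1 else 0))"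

definition mu :: "(nat \<Rightarrow> nat \<Rightarrow> 'k::field) \<Rightarrow> nat \<Rightarrow> (nat \<Rightarrow> nat) list \<Rightarrow> nat list \<Rightarrow> nat list \<Rightarrow> 'k" where
  "mu q N ls js rs = (THE m. vsmult m (amul q N (mon (Qvec ls js rs))
        (amul q N (word q N js) (mon (Qhat ls js rs)))) = monprod q N ls)"

definition Psi_gen :: "(nat \<Rightarrow> nat \<Rightarrow> 'k::field) \<Rightarrow> nat \<Rightarrow> (nat \<Rightarrow> nat) list \<Rightarrow>
    (nat \<Rightarrow> nat) \<times> nat list \<times> (nat \<Rightarrow> nat) \<Rightarrow> 'k" where
  "Psi_gen q N ls = (if ls = [] then vsingle (mzero, [], mzero) 1 else
     (\<lambda>y. \<Sum>js\<in>incseqs N (length ls). \<Sum>rs\<in>rsets ls js.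
         mu q N ls js rs * vsingle (Qvec ls js rs, js, Qhat ls js rs) 1 y))"

definition Psi :: "(nat \<Rightarrow> nat \<Rightarrow> 'k::field) \<Rightarrow> nat \<Rightarrow>
    ((nat \<Rightarrow> nat) \<times> (nat \<Rightarrow> nat) list \<times> (nat \<Rightarrow> nat) \<Rightarrow> 'k) \<Rightarrow>
    (nat \<Rightarrow> nat) \<times> nat list \<times> (nat \<Rightarrow> nat) \<Rightarrow> 'k" where
  "Psi q N v = bimod_ext q N (Psi_gen q N) v"

end

theory Submission
  imports Defs "HOL-Library.Poly_Mapping"
begin

(* Idea.  Both complexes have monomial bases, and every structure map (the differentials,
   the augmentations, Phi and Psi) sends a basis vector X to a combination
   \<Sum>Y c(X,Y) Y whose coefficients are an integer times w(X)/w(Y), where the weight w of a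
   basis tensor x^a \<otimes> \<dots> \<otimes> x^b is the scalar that normal-orders the product of all its
   factors.  So every structure map is a diagonal twist of its q = 1 ("integer") version,
   written here as a formal integer combination (a fragment 'a \<Rightarrow>\<^sub>0 int), and twists compose.
   The three claims therefore reduce to identities between integer maps:
   - Phi is a chain map: after antisymmetrisation the interior bar faces cancel in pairs;
   - Psi is a chain map: Psi is an iterated product in the graded algebra of Koszul basis
     words, whose differential is a derivation, and the resulting boundary telescopes;
   - Psi \<circ> Phi = id: among all permutations only the identity yields an increasing word. *)

lemma lin_ext_superset:
  assumes "finite S" "supp v \<subseteq> S"
  shows "lin_ext f v y = (\<Sum>x\<in>S. v x * f x y)"
  unfolding lin_ext_def
  by (rule sum.mono_neutral_left) (use assms in \<open>auto simp: supp_def\<close>)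

lemma lin_ext_cong:
  assumes "\<And>x. x \<in> supp v \<Longrightarrow> f x = g x"
  shows "lin_ext f v = lin_ext g v"
  unfolding lin_ext_def using assms by auto

lemma supp_lin_ext: "supp (lin_ext g v) \<subseteq> (\<Union>x\<in>supp v. supp (g x))"
  unfolding lin_ext_def supp_def
  by (auto intro: ccontr elim!: sum.not_neutral_contains_not_neutral)

lemma lin_ext_comp:
  assumes fin: "finite (supp v)" and fg: "\<And>x. x \<in> supp v \<Longrightarrow> finite (supp (g x))"
  shows "lin_ext f (lin_ext g v) = lin_ext (\<lambda>x. lin_ext f (g x)) v"
proof
  fix y
  define S where "S = (\<Union>x\<in>supp v. supp (g x))"
  have finS: "finite S" using fin fg by (auto simp: S_def)
  have "lin_ext f (lin_ext g v) y = (\<Sum>z\<in>S. lin_ext g v z * f z y)"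
    by (rule lin_ext_superset[OF finS]) (unfold S_def, rule supp_lin_ext)
  also have "\<dots> = (\<Sum>z\<in>S. (\<Sum>x\<in>supp v. v x * g x z) * f z y)"
    by (simp add: lin_ext_def)
  also have "\<dots> = (\<Sum>x\<in>supp v. v x * (\<Sum>z\<in>S. g x z * f z y))"
    by (simp add: sum_distrib_left sum_distrib_right mult.assoc sum.swap[of _ S])
  also have "\<dots> = (\<Sum>x\<in>supp v. v x * lin_ext f (g x) y)"
    by (rule sum.cong[OF refl], subst lin_ext_superset[OF finS]) (auto simp: S_def)
  finally show "lin_ext f (lin_ext g v) y = lin_ext (\<lambda>x. lin_ext f (g x)) v y"
    by (simp add: lin_ext_def)
qed

lemma lin_ext_single_id:
  assumes "finite (supp v)"
  shows "lin_ext (\<lambda>x. vsingle x 1) v = v"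
proof
  fix y
  have "lin_ext (\<lambda>x. vsingle x 1) v y = (\<Sum>x\<in>supp v. if y = x then v x else 0)"
    unfolding lin_ext_def vsingle_def by (rule sum.cong) auto
  also have "\<dots> = v y"
    using assms by (simp add: sum.delta supp_def)
  finally show "lin_ext (\<lambda>x. vsingle x 1) v y = v y" .
qed

lemma lin_ext_vsingle: "lin_ext f (vsingle x c) = (\<lambda>y. c * f x y)"
proof
  fix y
  show "lin_ext f (vsingle x c) y = c * f x y"
  proof (cases "c = 0")
    case True
    then show ?thesis by (simp add: lin_ext_def supp_def vsingle_def)
  next
    case False
    then have "supp (vsingle x c) = {x}" by (auto simp: supp_def vsingle_def)
    then show ?thesis by (simp add: lin_ext_def vsingle_def)
  qed
qed

lemma vsmult_vsingle: "vsmult (c::'k::comm_ring_1) (vsingle x d) = vsingle x (c * d)"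
  by (auto simp: vsmult_def vsingle_def)

lemma vsingle_eq_iff: "vsingle x c = vsingle x d \<longleftrightarrow> c = d"
  by (metis vsingle_def)

text \<open>The scalars q_\<pi> and \<mu> of the paper are defined by a THE over such a proportionality.\<close>
lemma the_ratio:
  fixes d e :: "'k::field"
  assumes "d \<noteq> 0"
  shows "(THE c. vsmult c (vsingle x d) = vsingle x e) = e / d"
  using assms by (simp add: vsmult_vsingle vsingle_eq_iff) (rule the_equality; simp add: field_simps)

definition vsum :: "'i set \<Rightarrow> ('i \<Rightarrow> 'k::comm_ring_1) \<Rightarrow> ('i \<Rightarrow> 'b) \<Rightarrow> 'b \<Rightarrow> 'k" where
  "vsum I c Y = (\<lambda>z. \<Sum>i\<in>I. c i * vsingle (Y i) 1 z)"

lemma supp_vsum: "supp (vsum I c Y) \<subseteq> Y ` I"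
  unfolding vsum_def supp_def vsingle_def
  by (auto elim!: sum.not_neutral_contains_not_neutral split: if_splits)

lemma vsum_cong:
  "(\<And>i. i \<in> I \<Longrightarrow> c i = c' i) \<Longrightarrow> (\<And>i. i \<in> I \<Longrightarrow> Y i = Y' i) \<Longrightarrow> vsum I c Y = vsum I c' Y'"
  by (simp add: vsum_def)

lemma lin_ext_vsum:
  assumes "finite I"
  shows "lin_ext f (vsum I c Y) = (\<lambda>z. \<Sum>i\<in>I. c i * f (Y i) z)"
proof
  fix z
  have "lin_ext f (vsum I c Y) z = (\<Sum>x\<in>Y ` I. vsum I c Y x * f x z)"
    using assms supp_vsum[of I c Y] by (intro lin_ext_superset) auto
  also have "\<dots> = (\<Sum>x\<in>Y ` I. \<Sum>i\<in>I. c i * (if x = Y i then 1 else 0) * f x z)"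
    by (simp add: vsum_def vsingle_def sum_distrib_right eq_commute)
  also have "\<dots> = (\<Sum>i\<in>I. \<Sum>x\<in>Y ` I. c i * (if x = Y i then 1 else 0) * f x z)"
    by (rule sum.swap)
  also have "\<dots> = (\<Sum>i\<in>I. \<Sum>x\<in>Y ` I. if x = Y i then c i * f x z else 0)"
    by (rule sum.cong[OF refl], rule sum.cong[OF refl]) auto
  also have "\<dots> = (\<Sum>i\<in>I. c i * f (Y i) z)"
    using assms by (simp add: sum.delta')
  finally show "lin_ext f (vsum I c Y) z = (\<Sum>i\<in>I. c i * f (Y i) z)" .
qed

lemma lin_ext_vsum_single:
  assumes "finite I" "\<And>x. f x = vsingle (F x) (d x)"
  shows "lin_ext f (vsum I c Y) = vsum I (\<lambda>i. c i * d (Y i)) (\<lambda>i. F (Y i))"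
  using lin_ext_vsum[OF assms(1), of f c Y]
  by (auto simp: vsum_def assms(2) vsingle_def intro!: sum.cong)

lemma madd_commute: "madd a b = madd b a"
  by (auto simp: madd_def)
lemma madd_assoc: "madd (madd a b) c = madd a (madd b c)"
  by (auto simp: madd_def)
lemma madd_left_commute: "madd a (madd b c) = madd b (madd a c)"
  by (auto simp: madd_def)
lemma madd_mzero [simp]: "madd mzero a = a" "madd a mzero = a"
  by (auto simp: madd_def mzero_def)
lemmas madd_ac = madd_assoc madd_commute madd_left_commute

definition msum :: "(nat \<Rightarrow> nat) list \<Rightarrow> nat \<Rightarrow> nat" where
  "msum xs = foldr madd xs mzero"

lemma msum_simps [simp]: "msum [] = mzero" "msum (x # xs) = madd x (msum xs)"
  by (simp_all add: msum_def)

lemma msum_append [simp]: "msum (xs @ ys) = madd (msum xs) (msum ys)"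
  by (induction xs) (simp_all add: madd_assoc)

lemma msum_apply: "msum xs j = (\<Sum>x\<leftarrow>xs. x j)"
  by (induction xs) (auto simp: madd_def mzero_def)

lemma msum_nth: "msum ls k = (\<Sum>t<length ls. (ls ! t) k)"
  by (simp add: msum_apply sum_list_sum_nth atLeast0LessThan)

context
  fixes q :: "nat \<Rightarrow> nat \<Rightarrow> 'k::field" and N :: nat
begin

lemma mcoef_madd_left: "mcoef q N (madd a b) c = mcoef q N a c * mcoef q N b c"
  unfolding mcoef_def madd_def by (simp add: add_mult_distrib power_add prod.distrib)

lemma mcoef_madd_right: "mcoef q N c (madd a b) = mcoef q N c a * mcoef q N c b"
  unfolding mcoef_def madd_def by (simp add: add_mult_distrib2 power_add prod.distrib)

lemma mcoef_mzero [simp]: "mcoef q N mzero c = 1" "mcoef q N c mzero = 1"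
  unfolding mcoef_def mzero_def by simp_all

lemma mcoef_nz:
  assumes "\<forall>i\<in>{1..N}. \<forall>j\<in>{1..N}. q i j \<noteq> 0"
  shows "mcoef q N a b \<noteq> 0"
  unfolding mcoef_def using assms by (auto simp: prod_zero_iff)

lemma mcoef_unitv:
  assumes "u \<in> {1..N}" "v \<in> {1..N}"
  shows "mcoef q N (unitv u) (unitv v) = (if v < u then q u v else 1)"
proof -
  have "mcoef q N (unitv u) (unitv v) = (\<Prod>i\<in>{1..N}. \<Prod>j\<in>{1..<i}. if i = u \<and> j = v then q i j else 1)"
    unfolding mcoef_def unitv_def by (intro prod.cong refl) auto
  also have "\<dots> = (\<Prod>i\<in>{1..N}. if i = u then (\<Prod>j\<in>{1..<i}. if j = v then q i j else 1) else 1)"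
    by (intro prod.cong refl) auto
  also have "\<dots> = (\<Prod>j\<in>{1..<u}. if j = v then q u j else 1)"
    using assms by (subst prod.delta) auto
  also have "\<dots> = (if v < u then q u v else 1)"
    using assms by (subst prod.delta) auto
  finally show ?thesis .
qed

text \<open>The normal-ordering weight: x^{l_1} \<cdots> x^{l_p} = mweight [l_1, ..., l_p] \<cdot> x^{l_1+...+l_p}.\<close>
fun mweight :: "(nat \<Rightarrow> nat) list \<Rightarrow> 'k" where
  "mweight [] = 1"
| "mweight (x # xs) = mcoef q N x (msum xs) * mweight xs"

lemma mweight_append: "mweight (xs @ ys) = mweight xs * mweight ys * mcoef q N (msum xs) (msum ys)"
  by (induction xs) (simp_all add: mcoef_madd_right mcoef_madd_left)

lemma mweight_nz:
  assumes "\<forall>i\<in>{1..N}. \<forall>j\<in>{1..N}. q i j \<noteq> 0"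
  shows "mweight xs \<noteq> 0"
  by (induction xs) (simp_all add: mcoef_nz[OF assms])

lemma mweight_triple:
  "mweight (a # W @ [b]) = mcoef q N a (msum W) * mcoef q N a b * mweight W * mcoef q N (msum W) b"
  by (simp add: mweight_append mcoef_madd_right)

lemma mweight_merge:
  assumes "Suc i < length L"
  shows "mweight L = mcoef q N (L!i) (L!Suc i) * mweight (take i L @ [madd (L!i) (L!Suc i)] @ drop (Suc (Suc i)) L)"
proof -
  have "drop i L = L ! i # L ! Suc i # drop (Suc (Suc i)) L"
    using assms by (metis Cons_nth_drop_Suc Suc_lessD)
  then have e: "L = take i L @ [L!i, L!Suc i] @ drop (Suc (Suc i)) L"
    by (metis append_Cons append_Nil append_take_drop_id)
  show ?thesis
    by (subst e) (simp add: mweight_append mcoef_madd_left mcoef_madd_right mult_ac)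
qed

end

lemma amul_vsingle:
  "amul q N (vsingle a c) (vsingle b d) = vsingle (madd a b) (c * d * mcoef q N a b)"
  unfolding amul_def lin_ext_vsingle by (rule ext) (simp add: vsingle_def)

lemma monprod_eq: "monprod q N ls = vsingle (msum ls) (mweight q N ls)"
  by (induction ls) (simp_all add: monprod_def Aone_def mon_def amul_vsingle mult_ac)

lemma word_eq: "word q N js = vsingle (msum (map unitv js)) (mweight q N (map unitv js))"
  by (induction js) (simp_all add: word_def Aone_def mon_def xgen_def amul_vsingle mult_ac)

section \<open>Twisting integer combinations by basis weights\<close>

text \<open>All structure maps of the
  theorem are twists of their q = 1 versions.\<close>
definition twist :: "('x \<Rightarrow> 'k::field) \<Rightarrow> ('y \<Rightarrow> 'k) \<Rightarrow> 'x \<Rightarrow> ('y \<Rightarrow>\<^sub>0 int) \<Rightarrow> 'y \<Rightarrow> 'k" where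
  "twist t1 t2 X w = (\<lambda>Y. of_int (Poly_Mapping.lookup w Y) * (t1 X / t2 Y))"

lemma supp_twist: "supp (twist t1 t2 X w) \<subseteq> Poly_Mapping.keys w"
  by (auto simp: twist_def supp_def in_keys_iff)

lemma finite_supp_twist: "finite (supp (twist t1 t2 X w))"
  by (meson finite_keys finite_subset supp_twist)

lemma lookup_frag_extend:
  "Poly_Mapping.lookup (frag_extend h w) z =
     (\<Sum>y\<in>Poly_Mapping.keys w. Poly_Mapping.lookup w y * Poly_Mapping.lookup (h y) z)"
  by (simp add: frag_extend_def lookup_sum)

text \<open>Twists compose: the weights of the middle basis cancel.\<close>
lemma twist_comp:
  assumes "\<And>Y. Y \<in> Poly_Mapping.keys w \<Longrightarrow> g Y = twist t2 t3 Y (h Y)"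
    and "\<And>Y. Y \<in> Poly_Mapping.keys w \<Longrightarrow> t2 Y \<noteq> 0"
  shows "lin_ext g (twist t1 t2 X w) = twist t1 t3 X (frag_extend h w)"
proof
  fix z
  have "lin_ext g (twist t1 t2 X w) z = (\<Sum>y\<in>Poly_Mapping.keys w. twist t1 t2 X w y * g y z)"
    by (rule lin_ext_superset) (auto simp: supp_twist)
  also have "\<dots> = (\<Sum>y\<in>Poly_Mapping.keys w.
      of_int (Poly_Mapping.lookup w y * Poly_Mapping.lookup (h y) z) * (t1 X / t3 z))"
    by (rule sum.cong[OF refl]) (use assms in \<open>simp add: twist_def\<close>)
  also have "\<dots> = twist t1 t3 X (frag_extend h w) z"
    by (simp add: twist_def lookup_frag_extend sum_distrib_right divide_inverse mult.assoc)
  finally show "lin_ext g (twist t1 t2 X w) z = twist t1 t3 X (frag_extend h w) z" .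
qed

lemma lin_ext_comp_twist:
  assumes "finite (supp v)"
    and "\<And>x. x \<in> supp v \<Longrightarrow> f x = twist t1 t2 x (F x)"
    and "\<And>x y. x \<in> supp v \<Longrightarrow> y \<in> Poly_Mapping.keys (F x) \<Longrightarrow> g y = twist t2 t3 y (G y)"
    and "\<And>y. t2 y \<noteq> 0"
  shows "lin_ext g (lin_ext f v) = lin_ext (\<lambda>x. twist t1 t3 x (frag_extend G (F x))) v"
proof -
  have "lin_ext g (lin_ext f v) = lin_ext (\<lambda>x. lin_ext g (f x)) v"
    by (rule lin_ext_comp) (use assms(1,2) in \<open>simp_all add: finite_supp_twist\<close>)
  also have "\<dots> = lin_ext (\<lambda>x. twist t1 t3 x (frag_extend G (F x))) v"
    by (rule lin_ext_cong) (simp add: assms(2-4) twist_comp)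
  finally show ?thesis .
qed

lemma vsum_twist:
  assumes "finite I" "\<And>i. i \<in> I \<Longrightarrow> c i * t2 (Y i) = of_int (e i) * t1 X"
    and "\<And>i. i \<in> I \<Longrightarrow> t2 (Y i) \<noteq> 0"
  shows "vsum I c Y = twist t1 t2 X (\<Sum>i\<in>I. frag_cmul (e i) (frag_of (Y i)))"
proof
  fix z
  have "vsum I c Y z = (\<Sum>i\<in>I. (if z = Y i then of_int (e i) * (t1 X / t2 z) else 0))"
    unfolding vsum_def vsingle_def
    by (rule sum.cong[OF refl]) (use assms in \<open>auto simp: field_simps\<close>)
  also have "\<dots> = (\<Sum>i\<in>I. of_int (if z = Y i then e i else 0) * (t1 X / t2 z))"
    by (rule sum.cong) auto
  also have "\<dots> = twist t1 t2 X (\<Sum>i\<in>I. frag_cmul (e i) (frag_of (Y i))) z"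
    by (simp add: twist_def lookup_sum sum_distrib_right of_int_sum divide_inverse mult.assoc
        if_distrib cong: if_cong)
  finally show "vsum I c Y z = twist t1 t2 X (\<Sum>i\<in>I. frag_cmul (e i) (frag_of (Y i))) z" .
qed

lemma twist_of: "t1 X = t2 Y \<Longrightarrow> t2 Y \<noteq> 0 \<Longrightarrow> twist t1 t2 X (frag_of Y) = vsingle Y 1"
  by (auto simp: twist_def vsingle_def)

lemma vecs_lin_ext_twist:
  assumes "vecs S v" "\<And>x. x \<in> S \<Longrightarrow> K x = twist t1 t2 x (F x)"
    and "\<And>x. x \<in> S \<Longrightarrow> Poly_Mapping.keys (F x) \<subseteq> T"
  shows "vecs T (lin_ext K v)"
proof -
  have fs: "finite (supp v)" "supp v \<subseteq> S" using assms(1) by (auto simp: vecs_def)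
  have "supp (lin_ext K v) \<subseteq> (\<Union>x\<in>supp v. supp (K x))" by (rule supp_lin_ext)
  also have "\<dots> \<subseteq> (\<Union>x\<in>supp v. Poly_Mapping.keys (F x))"
  proof (rule UN_mono[OF order_refl])
    fix x assume "x \<in> supp v"
    then have "x \<in> S" using fs(2) by auto
    show "supp (K x) \<subseteq> Poly_Mapping.keys (F x)" unfolding assms(2)[OF \<open>x \<in> S\<close>] by (rule supp_twist)
  qed
  finally have s: "supp (lin_ext K v) \<subseteq> (\<Union>x\<in>supp v. Poly_Mapping.keys (F x))" .
  have "finite (\<Union>x\<in>supp v. Poly_Mapping.keys (F x))" using fs(1) by simp
  moreover have "(\<Union>x\<in>supp v. Poly_Mapping.keys (F x)) \<subseteq> T" using fs(2) assms(3) by auto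
  ultimately show ?thesis using s by (auto simp: vecs_def intro: finite_subset)
qed

lemma frag_cmul_diff2: "frag_cmul c (a - b) = frag_cmul c a - frag_cmul c b"
  by (rule poly_mapping_eqI) (simp add: lookup_minus algebra_simps)

lemma frag_self_neg: "(S :: 'a \<Rightarrow>\<^sub>0 int) = - S \<Longrightarrow> S = 0"
  by (rule poly_mapping_eqI) (metis add.inverse_inverse lookup_uminus lookup_zero neg_equal_zero)

section \<open>The integer (q = 1) structure maps\<close>

text \<open>Basis vectors of K_p and of B_p(A): x^a \<otimes> (x_{j_1} \<and> \<dots> \<and> x_{j_p}) \<otimes> x^b and
  x^a \<otimes> x^{l_1} \<otimes> \<dots> \<otimes> x^{l_p} \<otimes> x^b.\<close>
type_synonym expv = "nat \<Rightarrow> nat"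
type_synonym kb = "expv \<times> nat list \<times> expv"
type_synonym bb = "expv \<times> expv list \<times> expv"

definition dK_int :: "kb \<Rightarrow> kb \<Rightarrow>\<^sub>0 int" where
  "dK_int x = (case x of (a,js,b) \<Rightarrow> \<Sum>i<length js. frag_cmul ((-1)^i)
      (frag_of (madd a (unitv (js!i)), del_at i js, b) - frag_of (a, del_at i js, madd (unitv (js!i)) b)))"

definition dB_int :: "bb \<Rightarrow> bb \<Rightarrow>\<^sub>0 int" where
  "dB_int x = (case x of (a, ls, b) \<Rightarrow> let L = a # ls @ [b] in
     \<Sum>i\<le>length ls. frag_cmul ((-1) ^ i)
        (frag_of (bar_of_list (take i L @ [madd (L ! i) (L ! Suc i)] @ drop (Suc (Suc i)) L))))"

definition pword :: "nat list \<Rightarrow> (nat \<Rightarrow> nat) \<Rightarrow> expv list" where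
  "pword js \<pi> = map (\<lambda>k. unitv (js ! \<pi> k)) [0..<length js]"

definition Phi_int :: "kb \<Rightarrow> bb \<Rightarrow>\<^sub>0 int" where
  "Phi_int x = (case x of (a,js,b) \<Rightarrow> \<Sum>\<pi>\<in>{\<pi>. \<pi> permutes {0..<length js}}.
      frag_cmul (sign \<pi>) (frag_of (a, pword js \<pi>, b)))"

text \<open>Peeling off the first factor of Q: for j the first chosen index, the part of l^1
  contributing to Q (variables after j, plus r copies of x_j) and to Q-hat (variables
  before j, plus the remaining copies of x_j except the one taken by the wedge).\<close>
definition Qleft :: "expv \<Rightarrow> nat \<Rightarrow> nat \<Rightarrow> expv" where
  "Qleft l j r = (\<lambda>k. if j < k then l k else if k = j then r else 0)"
definition Qright :: "expv \<Rightarrow> nat \<Rightarrow> nat \<Rightarrow> expv" where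
  "Qright l j r = (\<lambda>k. if k < j then l k else if k = j then l j - r - 1 else 0)"

lemma card_Cons_sorted:
  fixes js :: "nat list"
  assumes "sorted_wrt (<) (j # js)"
  shows "card {i. i < length (j # js) \<and> (j # js) ! i < k} =
         (if j < k then Suc (card {i. i < length js \<and> js ! i < k}) else 0)"
proof (cases "j < k")
  case True
  have "{i. i < length (j # js) \<and> (j # js) ! i < k} = insert 0 (Suc ` {i. i < length js \<and> js ! i < k})"
  proof (rule set_eqI)
    fix x show "x \<in> {i. i < length (j # js) \<and> (j # js) ! i < k} \<longleftrightarrow> x \<in> insert 0 (Suc ` {i. i < length js \<and> js ! i < k})"
      using True by (cases x) auto
  qed
  then show ?thesis using True by (simp add: card_image)
next
  case False
  have "{i. i < length (j # js) \<and> (j # js) ! i < k} = {}"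
  proof (rule set_eqI)
    fix x show "x \<in> {i. i < length (j # js) \<and> (j # js) ! i < k} \<longleftrightarrow> x \<in> {}"
    proof (cases x)
      case (Suc n)
      show ?thesis
      proof
        assume "x \<in> {i. i < length (j # js) \<and> (j # js) ! i < k}"
        then have "n < length js" "js ! n < k" by (auto simp: Suc)
        moreover have "j < js ! n" using assms \<open>n < length js\<close> by (simp add: nth_mem)
        ultimately have False using False by linarith
        then show "x \<in> {}" ..
      qed simp
    qed (use False in simp)
  qed
  then show ?thesis using False by simp
qed

lemma card_low:
  fixes js :: "nat list"
  assumes "\<forall>x\<in>set js. k \<le> x"
  shows "card {i. i < length js \<and> js ! i < k} = 0"
proof -
  have "\<forall>i<length js. k \<le> js ! i" using assms by (simp add: nth_mem)
  then have "{i. i < length js \<and> js ! i < k} = {}" using not_less by auto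
  then show ?thesis by simp
qed

lemma Qvec_low:
  assumes "\<forall>x\<in>set js. k < x"
  shows "Qvec ls js rs k = 0"
proof -
  have c: "card {i. i < length js \<and> js ! i < k} = 0" using assms by (intro card_low) auto
  have "k \<notin> set js" using assms by auto
  then show ?thesis by (simp add: Qvec_def c)
qed

lemma Qvec_Nil: "Qvec [] [] [] = mzero"
  by (simp add: Qvec_def mzero_def fun_eq_iff)

lemma Qhat_Nil: "Qhat [] [] [] = mzero"
  by (simp add: Qhat_def mzero_def fun_eq_iff)

lemma sum_nth_Cons: "(\<Sum>t<Suc (length ls). ((l # ls) ! t) k) = l k + (\<Sum>t<length ls. (ls ! t) k)"
  by (simp only: sum.lessThan_Suc_shift) simp

lemma Qvec_Cons:
  assumes "sorted_wrt (<) (j # js)" "length ls = length js" "length rs = length js"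
  shows "Qvec (l # ls) (j # js) (r # rs) = madd (Qleft l j r) (Qvec ls js rs)"
proof
  fix k
  have gt: "\<forall>x\<in>set js. j < x" using assms(1) by simp
  show "Qvec (l # ls) (j # js) (r # rs) k = madd (Qleft l j r) (Qvec ls js rs) k"
  proof (cases "j < k")
    case True
    define c where "c = card {i. i < length js \<and> js ! i < k}"
    have c1: "card {i. i < length (j # js) \<and> (j # js) ! i < k} = Suc c"
      using card_Cons_sorted[OF assms(1), of k] True by (simp add: c_def)
    have m: "k \<in> set (j # js) \<longleftrightarrow> k \<in> set js" using True by auto
    have "Qvec (l # ls) (j # js) (r # rs) k = (if k \<in> set js then rs ! c else 0) + (\<Sum>t<Suc c. ((l # ls) ! t) k)"
      by (simp only: Qvec_def Let_def c1 m) simp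
    also have "(\<Sum>t<Suc c. ((l # ls) ! t) k) = l k + (\<Sum>t<c. (ls ! t) k)"
      by (simp only: sum.lessThan_Suc_shift) simp
    finally show ?thesis using True by (simp add: Qvec_def c_def madd_def Qleft_def Let_def)
  next
    case False
    have low: "Qvec ls js rs k = 0" by (rule Qvec_low) (use gt False in auto)
    have notin: "k \<notin> set js" using gt False by auto
    have c1: "card {i. i < length (j # js) \<and> (j # js) ! i < k} = 0"
      using card_Cons_sorted[OF assms(1), of k] False by simp
    have "Qvec (l # ls) (j # js) (r # rs) k = (if k \<in> set (j # js) then r else 0)"
      by (simp only: Qvec_def Let_def c1) simp
    then show ?thesis using False low notin by (auto simp: madd_def Qleft_def)
  qed
qed

definition admissible :: "expv list \<Rightarrow> nat list \<Rightarrow> nat list \<Rightarrow> bool" where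
  "admissible ls js rs \<longleftrightarrow> sorted_wrt (<) js \<and> length ls = length js \<and> length rs = length js \<and>
     (\<forall>s<length js. rs ! s < (ls ! s) (js ! s))"

lemma admissible_Cons: "admissible (l # ls) (j # js) (r # rs) \<longleftrightarrow>
    sorted_wrt (<) (j # js) \<and> r < l j \<and> admissible ls js rs"
  by (auto simp: admissible_def All_less_Suc2)

text \<open>Q, together with the wedge letters, never exceeds the total exponent, so the
  truncated subtraction defining Q-hat is exact.\<close>
lemma Qvec_le:
  "admissible ls js rs \<Longrightarrow> Qvec ls js rs k + (if k \<in> set js then 1 else 0) \<le> (\<Sum>t<length ls. (ls ! t) k)"
proof (induction js arbitrary: ls rs)
  case Nil
  then have "ls = []" "rs = []" by (auto simp: admissible_def)
  then show ?case by (simp add: Qvec_Nil mzero_def)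
next
  case (Cons j js)
  obtain l ls' r rs' where e: "ls = l # ls'" "rs = r # rs'"
    using Cons.prems by (cases ls; cases rs) (auto simp: admissible_def)
  have R: "sorted_wrt (<) (j # js)" "r < l j" "admissible ls' js rs'" using Cons.prems by (auto simp: e admissible_Cons)
  have IH: "Qvec ls' js rs' k + (if k \<in> set js then 1 else 0) \<le> (\<Sum>t<length ls'. (ls' ! t) k)"
    using Cons.IH[OF R(3)] .
  have len: "length ls' = length js" "length rs' = length js" using R(3) by (auto simp: admissible_def)
  have notin: "k = j \<Longrightarrow> k \<notin> set js" using R(1) by auto
  have a: "Qleft l j r k + (if k = j then 1 else 0) \<le> l k" using R(2) by (auto simp: Qleft_def)
  show ?case
    unfolding e length_Cons sum_nth_Cons Qvec_Cons[OF R(1) len]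
    using IH a notin by (auto simp: madd_def)
qed

lemma Qhat_Cons:
  assumes "admissible (l # ls) (j # js) (r # rs)"
  shows "Qhat (l # ls) (j # js) (r # rs) = madd (Qright l j r) (Qhat ls js rs)"
proof
  fix k
  have R: "sorted_wrt (<) (j # js)" "r < l j" "admissible ls js rs" using assms by (auto simp: admissible_Cons)
  have len: "length ls = length js" "length rs = length js" using R(3) by (auto simp: admissible_def)
  have IH: "Qvec ls js rs k + (if k \<in> set js then 1 else 0) \<le> (\<Sum>t<length ls. (ls ! t) k)"
    using Qvec_le[OF R(3)] .
  have notin: "k = j \<Longrightarrow> k \<notin> set js" using R(1) by auto
  have a: "Qleft l j r k + (if k = j then 1 else 0) \<le> l k" using R(2) by (auto simp: Qleft_def)
  have b: "Qright l j r k = l k - Qleft l j r k - (if k = j then 1 else 0)"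
    by (auto simp: Qright_def Qleft_def)
  show "Qhat (l # ls) (j # js) (r # rs) k = madd (Qright l j r) (Qhat ls js rs) k"
    using IH a notin unfolding Qhat_def length_Cons sum_nth_Cons Qvec_Cons[OF R(1) len]
    by (auto simp: madd_def b)
qed

lemma msum_unitv_distinct:
  assumes "distinct js"
  shows "msum (map unitv js) k = (if k \<in> set js then 1 else 0)"
proof -
  have "msum (map unitv js) k = (\<Sum>x\<leftarrow>js. unitv x k)" by (simp add: msum_apply comp_def)
  also have "\<dots> = (\<Sum>x\<in>set js. unitv x k)" using assms by (simp add: sum.distinct_set_conv_list)
  also have "\<dots> = (if k \<in> set js then 1 else 0)" by (simp add: unitv_def sum.delta eq_commute)
  finally show ?thesis .
qed

lemma Q_decomposition:
  assumes "admissible ls js rs"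
  shows "madd (Qvec ls js rs) (madd (msum (map unitv js)) (Qhat ls js rs)) = msum ls"
proof
  fix k
  have d: "distinct js" using assms by (auto simp: admissible_def strict_sorted_iff)
  show "madd (Qvec ls js rs) (madd (msum (map unitv js)) (Qhat ls js rs)) k = msum ls k"
    using Qvec_le[OF assms, of k] by (simp add: madd_def msum_unitv_distinct[OF d] Qhat_def msum_nth[of ls])
qed

text \<open>The integer Psi: the paper's formula with all scalars \<mu> replaced by 1.\<close>
definition Psi_int :: "nat \<Rightarrow> bb \<Rightarrow> kb \<Rightarrow>\<^sub>0 int" where
  "Psi_int N x = (case x of (a,ls,b) \<Rightarrow> if ls = [] then frag_of (a, [], b) else
     (\<Sum>(js,rs)\<in>(SIGMA js:incseqs N (length ls). rsets ls js).
        frag_of (madd a (Qvec ls js rs), js, madd (Qhat ls js rs) b)))"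

lemma finite_incseqs: "finite (incseqs N p)"
proof -
  have "incseqs N p \<subseteq> {js. set js \<subseteq> {1..N} \<and> length js = p}" by (auto simp: incseqs_def)
  then show ?thesis using finite_lists_length_eq[of "{1..N}" p] finite_subset by auto
qed

lemma finite_rsets: "finite (rsets ls js)"
proof -
  define B where "B = (\<Sum>s<length js. (ls ! s) (js ! s))"
  have "rsets ls js \<subseteq> {rs. set rs \<subseteq> {..<B} \<and> length rs = length js}"
  proof
    fix rs assume "rs \<in> rsets ls js"
    then have r: "length rs = length js" "\<forall>s<length js. rs ! s < (ls ! s) (js ! s)" by (auto simp: rsets_def)
    have "\<forall>s<length js. rs ! s < B"
    proof (intro allI impI)
      fix s assume "s < length js"
      then have "(ls ! s) (js ! s) \<le> B" unfolding B_def by (intro member_le_sum) auto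
      then show "rs ! s < B" using r \<open>s < length js\<close> by (meson less_le_trans)
    qed
    then show "rs \<in> {rs. set rs \<subseteq> {..<B} \<and> length rs = length js}"
      using r by (auto simp: in_set_conv_nth)
  qed
  then show ?thesis using finite_lists_length_eq[of "{..<B}" "length js"] finite_subset by auto
qed

lemma admissible_of:
  assumes "js \<in> incseqs N (length ls)" "rs \<in> rsets ls js"
  shows "admissible ls js rs"
  using assms by (auto simp: incseqs_def rsets_def admissible_def)

lemma Phi_int_nil: "Phi_int (a, [], b) = frag_of (a, [], b)"
proof -
  have "{\<pi>. \<pi> permutes {0..<0::nat}} = {id}" by (auto simp: permutes_empty)
  then show ?thesis by (simp add: Phi_int_def pword_def)
qed

section \<open>The structure maps as twists of the integer maps\<close>

lemma prod_upto_take: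
  assumes "i < length js"
  shows "(\<Prod>s\<in>{0..i}. f (js ! s)) = (\<Prod>x\<leftarrow>take i js. f x) * f (js ! i)"
proof -
  have "(\<Prod>x\<leftarrow>take i js. f x) = (\<Prod>s\<in>{0..<i}. f (js ! s))"
    using assms by (subst prod.list_conv_set_nth) (auto intro!: prod.cong)
  moreover have "{0..i} = insert i {0..<i}" by auto
  ultimately show ?thesis by (simp add: mult.commute)
qed

lemma prod_from_drop:
  assumes "i < length js"
  shows "(\<Prod>s\<in>{i..<length js}. f (js ! s)) = f (js ! i) * (\<Prod>y\<leftarrow>drop (Suc i) js. f y)"
proof -
  have "(\<Prod>y\<leftarrow>drop (Suc i) js. f y) = (\<Prod>t\<in>{0..<length js - Suc i}. f (js ! (Suc i + t)))"
    using assms by (subst prod.list_conv_set_nth) (auto intro!: prod.cong)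
  also have "\<dots> = (\<Prod>s\<in>{Suc i..<length js}. f (js ! s))"
  proof -
    have ee: "(length js - Suc i) + Suc i = length js" using assms by simp
    have "(\<Prod>s\<in>{Suc i..<length js}. f (js ! s)) = (\<Prod>s\<in>{0 + Suc i..<(length js - Suc i) + Suc i}. f (js ! s))"
      by (simp only: ee add_0)
    also have "\<dots> = (\<Prod>t\<in>{0..<length js - Suc i}. f (js ! (t + Suc i)))"
      by (rule prod.shift_bounds_nat_ivl)
    finally show ?thesis by (simp add: add.commute)
  qed
  finally have "(\<Prod>y\<leftarrow>drop (Suc i) js. f y) = (\<Prod>s\<in>{Suc i..<length js}. f (js ! s))" .
  moreover have "{i..<length js} = insert i {Suc i..<length js}" using assms by auto
  ultimately show ?thesis by simp
qed

lemma sorted_split: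
  assumes "sorted_wrt (<) js" "i < length js"
  shows "\<forall>x\<in>set (take i js). x < js ! i" "\<forall>y\<in>set (drop (Suc i) js). js ! i < y"
proof -
  have e: "js = take i js @ js ! i # drop (Suc i) js" using assms by (simp add: id_take_nth_drop)
  have "sorted_wrt (<) (take i js @ js ! i # drop (Suc i) js)" using assms(1) e by simp
  then show "\<forall>x\<in>set (take i js). x < js ! i" "\<forall>y\<in>set (drop (Suc i) js). js ! i < y"
    by (auto simp: sorted_wrt_append)
qed

text \<open>The weights wB and wK of bar and Koszul basis vectors are the normal-ordering weights of
  the lists of all their tensor factors (a wedge x_{j_1} \<and> \<dots> \<and> x_{j_p} counts as the product
  x_{j_1} \<cdots> x_{j_p}).\<close>
locale qparams =
  fixes q :: "nat \<Rightarrow> nat \<Rightarrow> 'k::field" and N :: nat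
  assumes qnz: "\<forall>i\<in>{1..N}. \<forall>j\<in>{1..N}. q i j \<noteq> 0"
    and qdiag: "\<forall>i\<in>{1..N}. q i i = 1"
    and qinv: "\<forall>i\<in>{1..N}. \<forall>j\<in>{1..N}. q j i = inverse (q i j)"
begin

abbreviation mc :: "(nat \<Rightarrow> nat) \<Rightarrow> (nat \<Rightarrow> nat) \<Rightarrow> 'k" where "mc \<equiv> mcoef q N"

definition wB :: "bb \<Rightarrow> 'k" where "wB = (\<lambda>(a,ls,b). mweight q N (a # ls @ [b]))"
definition wK :: "kb \<Rightarrow> 'k" where "wK = (\<lambda>(a,js,b). mweight q N (a # map unitv js @ [b]))"

lemma mc_nz: "mc a b \<noteq> 0" using mcoef_nz[OF qnz] .
lemma mweight_ne0: "mweight q N xs \<noteq> 0" using mweight_nz[OF qnz] .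
lemma wB_nz: "wB x \<noteq> 0" by (auto simp: wB_def mweight_ne0 mc_nz split: prod.splits)
lemma wK_nz: "wK x \<noteq> 0" by (auto simp: wK_def mweight_ne0 mc_nz split: prod.splits)

lemma lact_vsum:
  assumes "finite I"
  shows "lact q N a (vsum I c Y) = vsum I (\<lambda>i. c i * mc a (fst (Y i)))
           (\<lambda>i. (madd a (fst (Y i)), fst (snd (Y i)), snd (snd (Y i))))"
  unfolding lact_def
  by (rule lin_ext_vsum_single[OF assms, where F="\<lambda>x. (madd a (fst x), fst (snd x), snd (snd x))"
        and d = "\<lambda>x. mc a (fst x)"]) (auto split: prod.splits)

lemma ract_vsum:
  assumes "finite I"
  shows "ract q N (vsum I c Y) b = vsum I (\<lambda>i. c i * mc (snd (snd (Y i))) b)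
           (\<lambda>i. (fst (Y i), fst (snd (Y i)), madd (snd (snd (Y i))) b))"
  unfolding ract_def
  by (rule lin_ext_vsum_single[OF assms, where F="\<lambda>x. (fst x, fst (snd x), madd (snd (snd x)) b)"
        and d = "\<lambda>x. mc (snd (snd x)) b"]) (auto split: prod.splits)

text \<open>Moving x_j past smaller (resp. larger) generators produces exactly the q-products
  occurring in the Koszul differential.\<close>
lemma mcoef_smaller_letters:
  assumes "\<forall>x\<in>set xs. x \<in> {1..N} \<and> x < j" "j \<in> {1..N}"
  shows "mc (msum (map unitv xs)) (unitv j) = 1 \<and> mc (unitv j) (msum (map unitv xs)) * (\<Prod>x\<leftarrow>xs. q x j) = 1"
  using assms
proof (induction xs)
  case (Cons x xs)
  have "q j x * q x j = 1" using Cons.prems qinv qnz by (auto simp: field_simps)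
  then show ?case using Cons
    by (auto simp: mcoef_madd_left mcoef_madd_right mcoef_unitv mult_ac)
qed simp

lemma mcoef_larger_letters:
  assumes "\<forall>y\<in>set ys. y \<in> {1..N} \<and> j < y" "j \<in> {1..N}"
  shows "mc (unitv j) (msum (map unitv ys)) = 1 \<and> mc (msum (map unitv ys)) (unitv j) * (\<Prod>y\<leftarrow>ys. q j y) = 1"
  using assms
proof (induction ys)
  case (Cons y ys)
  have "q y j * q j y = 1" using Cons.prems qinv qnz by (auto simp: field_simps)
  then show ?case using Cons
    by (auto simp: mcoef_madd_left mcoef_madd_right mcoef_unitv mult_ac)
qed simp

text \<open>The coefficients of d_p are the weight quotients: both faces of d_p are, up to sign,
  wK(source)/wK(face).\<close>
lemma dK_coeff_weights:
  assumes "sorted_wrt (<) js" "set js \<subseteq> {1..N}" "i < length js"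
  shows "(\<Prod>s\<in>{0..i}. q (js ! s) (js ! i)) * mc a (unitv (js ! i)) *
           wK (madd a (unitv (js ! i)), del_at i js, b) = wK (a, js, b)"
    and "(\<Prod>s\<in>{i..<length js}. q (js ! i) (js ! s)) * mc (unitv (js ! i)) b *
           wK (a, del_at i js, madd (unitv (js ! i)) b) = wK (a, js, b)"
proof -
  define xs where "xs = take i js"
  define ys where "ys = drop (Suc i) js"
  define j where "j = js ! i"
  have e: "js = xs @ j # ys" using assms by (simp add: id_take_nth_drop xs_def ys_def j_def)
  have d: "del_at i js = xs @ ys" by (simp add: del_at_def xs_def ys_def)
  have jr: "j \<in> {1..N}" using assms(2) nth_mem[OF assms(3)] by (auto simp: j_def)
  have xr: "\<forall>x\<in>set xs. x \<in> {1..N} \<and> x < j"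
    using sorted_split[OF assms(1,3)] assms(2) by (auto simp: xs_def j_def dest: in_set_takeD)
  have yr: "\<forall>y\<in>set ys. y \<in> {1..N} \<and> j < y"
    using sorted_split[OF assms(1,3)] assms(2) by (auto simp: ys_def j_def dest: in_set_dropD)
  note L = mcoef_smaller_letters[OF xr jr] and R = mcoef_larger_letters[OF yr jr]
  have P1: "(\<Prod>s\<in>{0..i}. q (js ! s) j) = inverse (mc (unitv j) (msum (map unitv xs)))"
    using L prod_upto_take[OF assms(3), of "\<lambda>x. q x j"] qdiag jr mc_nz
    by (auto simp: j_def xs_def field_simps)
  have P2: "(\<Prod>s\<in>{i..<length js}. q j (js ! s)) = inverse (mc (msum (map unitv ys)) (unitv j))"
    using R prod_from_drop[OF assms(3), of "\<lambda>y. q j y"] qdiag jr mc_nz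
    by (auto simp: j_def ys_def field_simps)
  show "(\<Prod>s\<in>{0..i}. q (js ! s) (js ! i)) * mc a (unitv (js ! i)) *
           wK (madd a (unitv (js ! i)), del_at i js, b) = wK (a, js, b)"
    unfolding wK_def d j_def[symmetric] unfolding P1 unfolding e
    using L R mc_nz mweight_ne0
    by (simp add: mweight_triple mweight_append mcoef_madd_left mcoef_madd_right field_simps)
  show "(\<Prod>s\<in>{i..<length js}. q (js ! i) (js ! s)) * mc (unitv (js ! i)) b *
           wK (a, del_at i js, madd (unitv (js ! i)) b) = wK (a, js, b)"
    unfolding wK_def d j_def[symmetric] unfolding P2 unfolding e
    using L R mc_nz mweight_ne0
    by (simp add: mweight_triple mweight_append mcoef_madd_left mcoef_madd_right field_simps)
qed

definition dK_on :: "kb \<Rightarrow> kb \<Rightarrow> 'k" where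
  "dK_on = (\<lambda>(a,w,b). lact q N a (ract q N (dK_gen q w) b))"

lemma dK_lin: "dK q N v = lin_ext dK_on v"
  by (simp add: dK_def bimod_ext_def dK_on_def)

lemma vsum_bool: "vsum (A \<times> UNIV) c Y = (\<lambda>z. \<Sum>i\<in>A. c (i,True) * vsingle (Y (i,True)) 1 z + c (i,False) * vsingle (Y (i,False)) 1 z)"
  unfolding vsum_def by (rule ext) (simp add: sum.cartesian_product' UNIV_bool, rule sum.cong, simp_all add: add.commute)

lemma dK_gen_vsum: "dK_gen q js = vsum ({..<length js} \<times> UNIV)
   (\<lambda>(i,t). if t then (-1)^i * (\<Prod>s\<in>{0..i}. q (js!s) (js!i)) else - ((-1)^i * (\<Prod>s\<in>{i..<length js}. q (js!i) (js!s))))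
   (\<lambda>(i,t). if t then (unitv (js!i), del_at i js, mzero) else (mzero, del_at i js, unitv (js!i)))"
  by (simp add: vsum_bool dK_gen_def sum_subtractf fun_eq_iff)

lemma dK_on_twist:
  assumes "sorted_wrt (<) js" "set js \<subseteq> {1..N}"
  shows "dK_on (a,js,b) = twist wK wK (a,js,b) (dK_int (a,js,b))"
proof -
  define I where "I = {..<length js} \<times> (UNIV :: bool set)"
  define C where "C = (\<lambda>(i,t). if t then (-1)^i * (\<Prod>s\<in>{0..i}. q (js!s) (js!i)) * mc a (unitv (js!i))
       else - ((-1)^i * (\<Prod>s\<in>{i..<length js}. q (js!i) (js!s)) * mc (unitv (js!i)) b))"
  define Yf where "Yf = (\<lambda>(i::nat,t). if t then (madd a (unitv (js!i)), del_at i js, b)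
       else (a, del_at i js, madd (unitv (js!i)) b))"
  define e where "e = (\<lambda>(i::nat,t). if t then ((-1)^i :: int) else - ((-1)^i))"
  have fin: "finite I" by (simp add: I_def)
  have "dK_on (a,js,b) = vsum I C Yf"
    unfolding dK_on_def dK_gen_vsum using fin unfolding I_def
    by (simp add: ract_vsum lact_vsum) (rule vsum_cong, auto simp: C_def Yf_def)
  also have "\<dots> = twist wK wK (a,js,b) (\<Sum>i\<in>I. frag_cmul (e i) (frag_of (Yf i)))"
  proof (rule vsum_twist[OF fin])
    fix i assume "i \<in> I"
    then obtain k t where i: "i = (k,t)" "k < length js" by (auto simp: I_def)
    show "C i * wK (Yf i) = of_int (e i) * wK (a, js, b)"
    proof (cases t)
      case True
      then show ?thesis using dK_coeff_weights(1)[OF assms i(2), where a=a and b=b]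
        by (simp add: i C_def Yf_def e_def mult.assoc)
    next
      case False
      then show ?thesis using dK_coeff_weights(2)[OF assms i(2), where a=a and b=b]
        by (simp add: i C_def Yf_def e_def mult.assoc)
    qed
  qed (rule wK_nz)
  also have "(\<Sum>i\<in>I. frag_cmul (e i) (frag_of (Yf i))) = dK_int (a,js,b)"
    unfolding I_def dK_int_def
    by (simp add: sum.cartesian_product' UNIV_bool e_def Yf_def frag_cmul_diff2 del: minus_frag_cmul)
       (rule sum.cong, simp_all add: minus_frag_cmul[symmetric] del: minus_frag_cmul)
  finally show ?thesis .
qed

definition dB_on :: "bb \<Rightarrow> bb \<Rightarrow> 'k" where
  "dB_on = (\<lambda>(a, ls, b). let L = a # ls @ [b] in
     (\<lambda>y. \<Sum>i\<le>length ls. (-1) ^ i * mcoef q N (L ! i) (L ! Suc i) *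
        vsingle (bar_of_list (take i L @ [madd (L ! i) (L ! Suc i)] @ drop (Suc (Suc i)) L)) 1 y))"

lemma dB_lin: "deltaB q N v = lin_ext dB_on v"
  by (simp add: deltaB_def dB_on_def)

lemma wB_bar_of_list:
  assumes "2 \<le> length M"
  shows "wB (bar_of_list M) = mweight q N M"
proof -
  have M: "M = hd M # tl M" "tl M \<noteq> []" using assms by (cases M; auto)+
  have e: "hd M # butlast (tl M) @ [last (tl M)] = M" using M by (metis append_butlast_last_id append_Cons)
  have l: "last M = last (tl M)" using M by (metis last_ConsR)
  show ?thesis by (simp only: bar_of_list_def wB_def prod.case l e)
qed

text \<open>The coefficients of the bar differential are the weight quotients: merging two
  factors multiplies the weight by their commutation scalar.\<close>
lemma dB_on_twist:
  assumes "ls \<noteq> []"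
  shows "dB_on (a,ls,b) = twist wB wB (a,ls,b) (dB_int (a,ls,b))"
proof -
  define L where "L = a # ls @ [b]"
  define Y where "Y = (\<lambda>i. bar_of_list (take i L @ [madd (L ! i) (L ! Suc i)] @ drop (Suc (Suc i)) L))"
  have "dB_on (a,ls,b) = vsum {..length ls} (\<lambda>i. (-1) ^ i * mc (L ! i) (L ! Suc i)) Y"
    unfolding dB_on_def vsum_def Y_def L_def by (simp only: Let_def prod.case)
  also have "\<dots> = twist wB wB (a,ls,b) (\<Sum>i\<in>{..length ls}. frag_cmul ((-1)^i) (frag_of (Y i)))"
  proof (rule vsum_twist)
    fix i assume i: "i \<in> {..length ls}"
    have l: "Suc i < length L" using i by (simp add: L_def)
    have A: "wB (Y i) = mweight q N (take i L @ [madd (L ! i) (L ! Suc i)] @ drop (Suc (Suc i)) L)"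
      unfolding Y_def
    proof (rule wB_bar_of_list)
      have "length ls \<ge> 1" using assms by (cases ls) auto
      then show "2 \<le> length (take i L @ [madd (L ! i) (L ! Suc i)] @ drop (Suc (Suc i)) L)"
        using l by (simp add: L_def)
    qed
    then show "(-1) ^ i * mc (L ! i) (L ! Suc i) * wB (Y i) = of_int ((-1)^i) * wB (a, ls, b)"
    proof -
      have C: "wB (a,ls,b) = mweight q N L" by (simp only: wB_def prod.case L_def)
      show ?thesis unfolding A C mweight_merge[OF l] by (simp add: mult.assoc)
    qed
  qed (auto simp: wB_nz)
  also have "(\<Sum>i\<in>{..length ls}. frag_cmul ((-1)^i) (frag_of (Y i))) = dB_int (a,ls,b)"
    by (simp only: dB_int_def Y_def L_def Let_def prod.case)
  finally show ?thesis .
qed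

definition Phi_on :: "kb \<Rightarrow> bb \<Rightarrow> 'k" where
  "Phi_on = (\<lambda>(a,w,b). lact q N a (ract q N (Phi_gen q N w) b))"

lemma Phi_lin: "Phi q N v = lin_ext Phi_on v"
  by (simp add: Phi_def bimod_ext_def Phi_on_def)

text \<open>A permuted word has the same total exponent, so q_\<pi> is a quotient of weights.\<close>
lemma msum_pword:
  assumes "\<pi> permutes {0..<length js}"
  shows "msum (pword js \<pi>) = msum (map unitv js)"
proof
  fix j
  have "msum (pword js \<pi>) j = (\<Sum>k\<in>{0..<length js}. unitv (js ! \<pi> k) j)"
    by (simp add: msum_apply pword_def sum_list_sum_nth)
  also have "\<dots> = (\<Sum>k\<in>{0..<length js}. unitv (js ! k) j)"
    using sum.permute[OF assms, of "\<lambda>k. unitv (js ! k) j"] by (simp add: comp_def)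
  also have "\<dots> = msum (map unitv js) j"
    by (simp add: msum_apply sum_list_sum_nth)
  finally show "msum (pword js \<pi>) j = msum (map unitv js) j" .
qed

lemma qperm_eq:
  assumes "\<pi> permutes {0..<length js}"
  shows "qperm q N js \<pi> = mweight q N (map unitv js) / mweight q N (pword js \<pi>)"
proof -
  have "map unitv (map (\<lambda>k. js ! \<pi> k) [0..<length js]) = pword js \<pi>"
    by (simp add: pword_def)
  then show ?thesis
    unfolding qperm_def word_eq using msum_pword[OF assms]
    by (simp add: the_ratio mweight_ne0)
qed

text \<open>Phi is the twist of the integer Phi: q_\<pi> \<cdot> wB(permuted word) = wK(wedge).\<close>
lemma Phi_on_twist_triple:
  "Phi_on (a,js,b) = twist wK wB (a,js,b) (Phi_int (a,js,b))"
proof -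
  define I where "I = {\<pi>. \<pi> permutes {0..<length js}}"
  have fin: "finite I" by (simp add: I_def finite_permutations)
  have "Phi_gen q N js = vsum I (\<lambda>\<pi>. of_int (sign \<pi>) * qperm q N js \<pi>) (\<lambda>\<pi>. (mzero, pword js \<pi>, mzero))"
    by (simp add: Phi_gen_def vsum_def I_def pword_def fun_eq_iff mult.assoc)
  then have "Phi_on (a,js,b) = vsum I (\<lambda>\<pi>. of_int (sign \<pi>) * qperm q N js \<pi>) (\<lambda>\<pi>. (a, pword js \<pi>, b))"
    by (simp add: Phi_on_def ract_vsum[OF fin] lact_vsum[OF fin])
  also have "\<dots> = twist wK wB (a,js,b) (\<Sum>\<pi>\<in>I. frag_cmul (sign \<pi>) (frag_of (a, pword js \<pi>, b)))"
  proof (rule vsum_twist[OF fin])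
    fix \<pi> assume "\<pi> \<in> I"
    then have p: "\<pi> permutes {0..<length js}" by (simp add: I_def)
    show "of_int (sign \<pi>) * qperm q N js \<pi> * wB (a, pword js \<pi>, b) = of_int (sign \<pi>) * wK (a, js, b)"
      unfolding wB_def wK_def prod.case mweight_triple
      using msum_pword[OF p] mweight_ne0
      by (simp add: qperm_eq[OF p])
  qed (rule wB_nz)
  finally show ?thesis by (simp add: Phi_int_def I_def)
qed

definition Psi_on :: "bb \<Rightarrow> kb \<Rightarrow> 'k" where
  "Psi_on = (\<lambda>(a,w,b). lact q N a (ract q N (Psi_gen q N w) b))"

lemma Psi_lin: "Psi q N v = lin_ext Psi_on v"
  by (simp add: Psi_def bimod_ext_def Psi_on_def)

text \<open>The scalar \<mu> of the paper is a quotient of weights, since Q + e_J + Q-hat is the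
  total exponent.\<close>
lemma mu_eq:
  assumes "admissible ls js rs"
  shows "mu q N ls js rs = mweight q N ls /
     (mweight q N (map unitv js) * mc (msum (map unitv js)) (Qhat ls js rs) *
      mc (Qvec ls js rs) (madd (msum (map unitv js)) (Qhat ls js rs)))"
proof -
  have "amul q N (mon (Qvec ls js rs)) (amul q N (word q N js) (mon (Qhat ls js rs))) =
    vsingle (msum ls) (mweight q N (map unitv js) * mc (msum (map unitv js)) (Qhat ls js rs) *
      mc (Qvec ls js rs) (madd (msum (map unitv js)) (Qhat ls js rs)))"
    by (simp add: mon_def word_eq amul_vsingle Q_decomposition[OF assms])
  then show ?thesis
    unfolding mu_def monprod_eq by (simp add: the_ratio mweight_ne0 mc_nz)
qed

lemma Psi_on_nil: "Psi_on (a, [], b) = vsingle (a, [], b) 1"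
  by (simp add: Psi_on_def Psi_gen_def lact_def ract_def lin_ext_vsingle)

text \<open>Psi is the twist of the integer Psi: \<mu> \<cdot> wK(term) = wB(source).\<close>
lemma Psi_on_twist_Cons:
  assumes "ls \<noteq> []"
  shows "Psi_on (a,ls,b) = twist wB wK (a,ls,b) (Psi_int N (a,ls,b))"
proof -
  define I where "I = (SIGMA js:incseqs N (length ls). rsets ls js)"
  define Y where "Y = (\<lambda>(js, rs). (madd a (Qvec ls js rs), js, madd (Qhat ls js rs) b))"
  have fin: "finite I" unfolding I_def by (intro finite_SigmaI finite_incseqs finite_rsets)
  have "Psi_gen q N ls = vsum I (\<lambda>(js,rs). mu q N ls js rs) (\<lambda>(js,rs). (Qvec ls js rs, js, Qhat ls js rs))"
    using assms unfolding Psi_gen_def vsum_def I_def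
    by (simp add: sum.Sigma[OF finite_incseqs] finite_rsets split_def fun_eq_iff)
  then have "Psi_on (a,ls,b) = vsum I (\<lambda>(js,rs). mu q N ls js rs *
          mc (Qhat ls js rs) b * mc a (Qvec ls js rs)) Y"
    by (simp add: Psi_on_def ract_vsum[OF fin] lact_vsum[OF fin] split_def Y_def)
  also have "\<dots> = twist wB wK (a,ls,b) (\<Sum>i\<in>I. frag_cmul 1 (frag_of (Y i)))"
  proof (rule vsum_twist[OF fin])
    fix i assume "i \<in> I"
    then obtain js rs where i: "i = (js,rs)" "js \<in> incseqs N (length ls)" "rs \<in> rsets ls js"
      by (auto simp: I_def)
    have R: "admissible ls js rs" using admissible_of[OF i(2,3)] .
    show "(case i of (js,rs) \<Rightarrow> mu q N ls js rs * mc (Qhat ls js rs) b * mc a (Qvec ls js rs)) *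
        wK (Y i) = of_int 1 * wB (a, ls, b)"
      unfolding i prod.case Y_def mu_eq[OF R] wK_def wB_def mweight_triple Q_decomposition[OF R, symmetric]
      using mweight_ne0 mc_nz
      by (simp add: mcoef_madd_left mcoef_madd_right field_simps)
  qed (rule wK_nz)
  also have "(\<Sum>i\<in>I. frag_cmul 1 (frag_of (Y i))) = Psi_int N (a,ls,b)"
    using assms by (simp add: Psi_int_def I_def Y_def split_def)
  finally show ?thesis .
qed

lemma Psi_on_twist: "Psi_on x = twist wB wK x (Psi_int N x)"
proof -
  obtain a ls b where x: "x = (a, ls, b)" by (cases x)
  show ?thesis
  proof (cases "ls = []")
    case True
    have "twist wB wK (a, [], b) (frag_of (a, [], b)) = vsingle (a, [], b) 1"
      by (rule twist_of) (simp_all add: wB_def wK_def mc_nz)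
    then show ?thesis using True by (simp add: x Psi_on_nil Psi_int_def)
  qed (simp add: x Psi_on_twist_Cons)
qed

lemma Phi_on_twist: "Phi_on x = twist wK wB x (Phi_int x)"
  by (cases x) (simp add: Phi_on_twist_triple)

lemma Phi_on_nil: "Phi_on (a, [], b) = vsingle (a, [], b) 1"
proof -
  have "twist wK wB (a, [], b) (frag_of (a, [], b)) = vsingle (a, [], b) 1"
    by (rule twist_of) (simp_all add: wB_def wK_def mc_nz)
  then show ?thesis by (simp add: Phi_on_twist Phi_int_nil)
qed

end

section \<open>The algebra of Koszul words\<close>

text \<open>Integer combinations of Koszul basis vectors form a graded algebra under
  concatenation: (a, J, b) \<cdot> (c, J', d) = (a + c, J @ J', b + d).  The integer Koszul
  differential DK is a graded derivation of it (Leibniz rule DK_kmul), which makes the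
  boundary of the iterated product defining Psi computable factor by factor.\<close>

lemma fe_fun_add: "frag_extend (\<lambda>x. f x + g x) u = frag_extend f u + frag_extend g u"
  by (simp add: frag_extend_def frag_cmul_distrib2 sum.distrib)

lemma fe_fun_diff: "frag_extend (\<lambda>x. f x - g x) u = frag_extend f u - frag_extend g u"
  by (simp add: frag_extend_def frag_cmul_diff2 sum_subtractf)

lemma fe_fun_cmul: "frag_extend (\<lambda>x. frag_cmul c (f x)) u = frag_cmul c (frag_extend f u)"
  by (simp add: frag_extend_def frag_cmul_sum mult.commute)

lemma fe_fun_zero: "frag_extend (\<lambda>x. 0) u = 0"
  by (simp add: frag_extend_def)

lemma fe_fun_sum: "frag_extend (\<lambda>x. \<Sum>i\<in>I. f i x) u = (\<Sum>i\<in>I. frag_extend (f i) u)"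
proof (induction I rule: infinite_finite_induct)
  case (infinite I) then show ?case by (simp add: fe_fun_zero)
next
  case empty then show ?case by (simp add: fe_fun_zero)
next
  case (insert i I) then show ?case by (simp add: fe_fun_add)
qed

definition kcat :: "kb \<Rightarrow> kb \<Rightarrow> kb" where
  "kcat x y = (case x of (a,J,b) \<Rightarrow> case y of (c,J',d) \<Rightarrow> (madd a c, J @ J', madd b d))"

lemma kcat_simp [simp]: "kcat (a,J,b) (c,J',d) = (madd a c, J @ J', madd b d)"
  by (simp add: kcat_def)

lemma kcat_assoc: "kcat (kcat x y) z = kcat x (kcat y z)"
  by (cases x; cases y; cases z) (simp add: madd_assoc)

definition kmul :: "(kb \<Rightarrow>\<^sub>0 int) \<Rightarrow> (kb \<Rightarrow>\<^sub>0 int) \<Rightarrow> kb \<Rightarrow>\<^sub>0 int" where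
  "kmul u v = frag_extend (\<lambda>x. frag_extend (\<lambda>y. frag_of (kcat x y)) v) u"

lemma kmul_of_left: "kmul (frag_of x) v = frag_extend (\<lambda>y. frag_of (kcat x y)) v"
  by (simp add: kmul_def)

lemma kmul_of_of [simp]: "kmul (frag_of x) (frag_of y) = frag_of (kcat x y)"
  by (simp add: kmul_def)

lemma kmul_of_right: "kmul u (frag_of y) = frag_extend (\<lambda>x. frag_of (kcat x y)) u"
  by (simp add: kmul_def)

lemma kmul_add1: "kmul (u + u') v = kmul u v + kmul u' v" by (simp add: kmul_def frag_extend_add)
lemma kmul_diff1: "kmul (u - u') v = kmul u v - kmul u' v" by (simp add: kmul_def frag_extend_diff)
lemma kmul_cmul1: "kmul (frag_cmul c u) v = frag_cmul c (kmul u v)" by (simp add: kmul_def frag_extend_cmul)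
lemma kmul_zero1 [simp]: "kmul 0 v = 0" by (simp add: kmul_def)
lemma kmul_sum1: "finite I \<Longrightarrow> kmul (\<Sum>i\<in>I. f i) v = (\<Sum>i\<in>I. kmul (f i) v)"
  by (simp add: kmul_def frag_extend_sum comp_def)
lemma kmul_add2: "kmul u (v + v') = kmul u v + kmul u v'" by (simp add: kmul_def frag_extend_add fe_fun_add)
lemma kmul_diff2: "kmul u (v - v') = kmul u v - kmul u v'" by (simp add: kmul_def frag_extend_diff fe_fun_diff)
lemma kmul_cmul2: "kmul u (frag_cmul c v) = frag_cmul c (kmul u v)" by (simp add: kmul_def frag_extend_cmul fe_fun_cmul)
lemma kmul_zero2 [simp]: "kmul u 0 = 0" by (simp add: kmul_def fe_fun_zero)
lemma kmul_sum2: "finite I \<Longrightarrow> kmul u (\<Sum>i\<in>I. f i) = (\<Sum>i\<in>I. kmul u (f i))"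
  by (simp add: kmul_def frag_extend_sum comp_def fe_fun_sum)

lemma kmul_assoc: "kmul (kmul u v) w = kmul u (kmul v w)"
proof -
  have A: "kmul (frag_of (kcat x y)) w = kmul (frag_of x) (kmul (frag_of y) w)" for x y
    using subset_UNIV
    by (induction w rule: frag_induction) (auto simp: kmul_diff2 kcat_assoc)
  have B: "kmul (kmul (frag_of x) v) w = kmul (frag_of x) (kmul v w)" for x
    using subset_UNIV
    by (induction v rule: frag_induction) (auto simp: kmul_diff2 kmul_diff1 A)
  show ?thesis
    using subset_UNIV
    by (induction u rule: frag_induction) (auto simp: kmul_diff1 B)
qed

definition kunit :: "kb \<Rightarrow>\<^sub>0 int" where "kunit = frag_of (mzero, [], mzero)"

lemma kmul_kunit_left [simp]: "kmul kunit v = v"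
  using subset_UNIV by (induction v rule: frag_induction) (auto simp: kunit_def kmul_diff2 kcat_def split: prod.splits)

lemma kmul_kunit_right [simp]: "kmul v kunit = v"
  using subset_UNIV by (induction v rule: frag_induction) (auto simp: kunit_def kmul_diff1 kcat_def split: prod.splits)

definition DK :: "(kb \<Rightarrow>\<^sub>0 int) \<Rightarrow> kb \<Rightarrow>\<^sub>0 int" where "DK = frag_extend dK_int"

definition kdeg :: "kb \<Rightarrow> nat" where "kdeg x = length (fst (snd x))"

lemma DK_of [simp]: "DK (frag_of x) = dK_int x" by (simp add: DK_def)
lemma DK_diff: "DK (u - v) = DK u - DK v" by (simp add: DK_def frag_extend_diff)
lemma DK_sum: "finite I \<Longrightarrow> DK (\<Sum>i\<in>I. f i) = (\<Sum>i\<in>I. DK (f i))" by (simp add: DK_def frag_extend_sum comp_def)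
lemma DK_zero [simp]: "DK 0 = 0" by (simp add: DK_def)

lemma sum_lessThan_add: "(\<Sum>i<m + (n::nat). f i) = (\<Sum>i<m. f i) + (\<Sum>i<n. f (m + i))"
  by (induction n) (simp_all add: add.assoc)

lemma del_at_append1: "i < length J \<Longrightarrow> del_at i (J @ J') = del_at i J @ J'"
  by (simp add: del_at_def)

lemma del_at_append2: "del_at (length J + i) (J @ J') = J @ del_at i J'"
  by (simp add: del_at_def)

text \<open>Graded Leibniz rule on basis vectors: faces of a concatenated word come from either factor.\<close>
lemma dK_int_kcat:
  "dK_int (kcat x y) = kmul (dK_int x) (frag_of y) + frag_cmul ((-1) ^ kdeg x) (kmul (frag_of x) (dK_int y))"
proof -
  obtain a J b where x: "x = (a,J,b)" by (cases x) auto
  obtain c J' d where y: "y = (c,J',d)" by (cases y) auto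
  have s1: "(\<Sum>i<length J. frag_cmul ((-1)^i)
      (frag_of (madd (madd a c) (unitv ((J @ J') ! i)), del_at i (J @ J'), madd b d) -
       frag_of (madd a c, del_at i (J @ J'), madd (unitv ((J @ J') ! i)) (madd b d))))
     = kmul (dK_int x) (frag_of y)"
    unfolding x y dK_int_def prod.case kmul_sum1[OF finite_lessThan] kmul_cmul1 kmul_diff1 kmul_of_of
    by (intro sum.cong refl) (simp add: nth_append del_at_append1 madd_ac)
  have s2: "(\<Sum>i<length J'. frag_cmul ((-1)^(length J + i))
      (frag_of (madd (madd a c) (unitv ((J @ J') ! (length J + i))), del_at (length J + i) (J @ J'), madd b d) -
       frag_of (madd a c, del_at (length J + i) (J @ J'), madd (unitv ((J @ J') ! (length J + i))) (madd b d))))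
     = frag_cmul ((-1) ^ kdeg x) (kmul (frag_of x) (dK_int y))"
    unfolding x y dK_int_def prod.case kmul_sum2[OF finite_lessThan] kmul_cmul2 kmul_diff2 kmul_of_of frag_cmul_sum
    by (intro sum.cong refl) (simp add: kdeg_def del_at_append2 madd_ac power_add)
  show ?thesis
    unfolding s1[symmetric] s2[symmetric]
    by (simp add: x y dK_int_def sum_lessThan_add)
qed

lemma DK_kmul_of: "DK (kmul (frag_of x) v) = kmul (DK (frag_of x)) v + frag_cmul ((-1) ^ kdeg x) (kmul (frag_of x) (DK v))"
  using subset_UNIV
  by (induction v rule: frag_induction)
     (auto simp: dK_int_kcat kmul_diff2 DK_diff kmul_of_left[symmetric] frag_cmul_diff2 algebra_simps)

lemma DK_kmul:
  assumes "Poly_Mapping.keys u \<subseteq> {x. kdeg x = p}"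
  shows "DK (kmul u v) = kmul (DK u) v + frag_cmul ((-1) ^ p) (kmul u (DK v))"
  using assms
proof (induction u rule: frag_induction)
  case (one x)
  then show ?case using DK_kmul_of[of x v] by simp
next
  case (diff a b)
  then show ?case by (simp add: kmul_diff1 DK_diff kmul_diff2 frag_cmul_diff2 algebra_simps)
qed simp

section \<open>The integer Psi is a chain map\<close>

text \<open>Psi on 1 \<otimes> x^{l_1} \<otimes> \<dots> \<otimes> x^{l_p} \<otimes> 1 is the iterated product over the factors
  l_s of psi1 j_s l_s, where psi1 j l = \<Sum>_{r<l_j} x^{Qleft} \<otimes> x_j \<otimes> x^{Qright} is the
  one-factor map (the only non-vanishing component of Psi_1 at the index j), constrained to
  increasing indices j_1 < \<dots> < j_p.  The boundary of psi1 j l is the difference of two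
  degree-0 cuts of x^l, split0 j l - split0 (j+1) l.\<close>
definition psi1 :: "nat \<Rightarrow> expv \<Rightarrow> kb \<Rightarrow>\<^sub>0 int" where
  "psi1 j l = (\<Sum>r<l j. frag_of (Qleft l j r, [j], Qright l j r))"

definition split0 :: "nat \<Rightarrow> expv \<Rightarrow> kb \<Rightarrow>\<^sub>0 int" where
  "split0 j l = frag_of (\<lambda>k. if j \<le> k then l k else 0, [], \<lambda>k. if k < j then l k else 0)"

text \<open>The boundary of psi1 telescopes in r to the difference of two cuts.\<close>
lemma DK_psi1: "DK (psi1 j l) = split0 j l - split0 (Suc j) l"
proof -
  define F where "F r = frag_of (Qleft l j r, [] :: nat list, \<lambda>k. if k < j then l k else if k = j then l j - r else 0)" for r
  have t: "dK_int (Qleft l j r, [j], Qright l j r) = F (Suc r) - F r" if "r < l j" for r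
  proof -
    have "madd (Qleft l j r) (unitv j) = Qleft l j (Suc r)"
      by (auto simp: madd_def Qleft_def unitv_def)
    moreover have "Qright l j r = (\<lambda>k. if k < j then l k else if k = j then l j - Suc r else 0)"
      by (auto simp: Qright_def)
    moreover have "madd (unitv j) (Qright l j r) = (\<lambda>k. if k < j then l k else if k = j then l j - r else 0)"
      using that by (auto simp: madd_def Qright_def unitv_def fun_eq_iff)
    ultimately show ?thesis by (simp add: dK_int_def F_def del_at_def)
  qed
  have "DK (psi1 j l) = (\<Sum>r<l j. F (Suc r) - F r)"
    unfolding psi1_def by (simp add: DK_sum t)
  also have "\<dots> = F (l j) - F 0" by (rule sum_lessThan_telescope)
  also have "F (l j) = split0 j l" unfolding F_def split0_def
    by (rule arg_cong[where f=frag_of]) (auto simp: Qleft_def fun_eq_iff)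
  also have "F 0 = split0 (Suc j) l" unfolding F_def split0_def
    by (rule arg_cong[where f=frag_of]) (auto simp: Qleft_def fun_eq_iff less_Suc_eq)
  finally show ?thesis .
qed

text \<open>psi1 is a twisted derivation in its exponent: the copies of x_j of l + m come first
  from l, then from m.\<close>
lemma psi1_madd: "psi1 j (madd l m) = kmul (psi1 j l) (split0 (Suc j) m) + kmul (split0 j l) (psi1 j m)"
proof -
  have "psi1 j (madd l m) = (\<Sum>r<l j. frag_of (Qleft (madd l m) j r, [j], Qright (madd l m) j r))
      + (\<Sum>r<m j. frag_of (Qleft (madd l m) j (l j + r), [j], Qright (madd l m) j (l j + r)))"
    unfolding psi1_def by (simp add: madd_def sum_lessThan_add)
  also have "(\<Sum>r<l j. frag_of (Qleft (madd l m) j r, [j], Qright (madd l m) j r)) = kmul (psi1 j l) (split0 (Suc j) m)"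
    unfolding psi1_def split0_def kmul_sum1[OF finite_lessThan] kmul_of_of
    by (intro sum.cong refl arg_cong[where f=frag_of]) (auto simp: Qleft_def Qright_def madd_def fun_eq_iff)
  also have "(\<Sum>r<m j. frag_of (Qleft (madd l m) j (l j + r), [j], Qright (madd l m) j (l j + r))) = kmul (split0 j l) (psi1 j m)"
    unfolding psi1_def split0_def kmul_sum2[OF finite_lessThan] kmul_of_of
    by (intro sum.cong refl arg_cong[where f=frag_of]) (auto simp: Qleft_def Qright_def madd_def fun_eq_iff)
  finally show ?thesis .
qed

lemma keys_psi1: "Poly_Mapping.keys (psi1 j l) \<subseteq> {x. kdeg x = 1}"
  unfolding psi1_def using keys_sum by (fastforce simp: kdeg_def)

fun psiseq :: "nat \<Rightarrow> expv list \<Rightarrow> nat \<Rightarrow> kb \<Rightarrow>\<^sub>0 int" where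
  "psiseq N [] lo = kunit"
| "psiseq N (l # ls) lo = (\<Sum>j\<in>{lo<..N}. kmul (psi1 j l) (psiseq N ls j))"

lemma sum_telescope_upto:
  fixes f :: "nat \<Rightarrow> 'a::ab_group_add"
  shows "lo \<le> N \<Longrightarrow> (\<Sum>j\<in>{lo<..N}. f j - f (Suc j)) = f (Suc lo) - f (Suc N)"
proof (induction N)
  case 0 then show ?case by simp
next
  case (Suc N)
  show ?case
  proof (cases "lo = Suc N")
    case True then show ?thesis by simp
  next
    case False
    then have "lo \<le> N" using Suc.prems by simp
    moreover have "{lo<..Suc N} = insert (Suc N) {lo<..N}" using \<open>lo \<le> N\<close> by auto
    ultimately show ?thesis using Suc.IH by simp
  qed
qed

lemma sum_telescope_below:
  fixes f :: "nat \<Rightarrow> 'a::ab_group_add"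
  assumes "lo < k"
  shows "(\<Sum>j\<in>{lo<..<k}. f j - f (Suc j)) = f (Suc lo) - f k"
proof -
  obtain N where k: "k = Suc N" "lo \<le> N" using assms by (cases k) auto
  have "{lo<..<k} = {lo<..N}" using k by auto
  then show ?thesis using sum_telescope_upto[OF k(2), of f] k by simp
qed

definition merge_at :: "nat \<Rightarrow> expv list \<Rightarrow> expv list" where
  "merge_at t ls = take (t - 1) ls @ [madd (ls ! (t - 1)) (ls ! t)] @ drop (Suc t) ls"

lemma merge_at_1: "merge_at (Suc 0) (l # m # ms) = madd l m # ms"
  by (simp add: merge_at_def)

lemma merge_at_Suc: "1 \<le> t \<Longrightarrow> merge_at (Suc t) (l # ls) = l # merge_at t ls"
  by (cases t) (simp_all add: merge_at_def)

text \<open>The boundary of psiseq predicted by the bar differential: outer faces and merges.\<close>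
definition psiseq_bdry :: "nat \<Rightarrow> expv list \<Rightarrow> nat \<Rightarrow> kb \<Rightarrow>\<^sub>0 int" where
  "psiseq_bdry N ls lo = kmul (split0 (Suc lo) (hd ls)) (psiseq N (tl ls) lo)
     + (\<Sum>t\<in>{1..<length ls}. frag_cmul ((-1)^t) (psiseq N (merge_at t ls) lo))
     + frag_cmul ((-1)^(length ls)) (kmul (psiseq N (butlast ls) lo) (split0 (Suc N) (last ls)))"

lemma split0_high:
  assumes "l \<in> expvecs N" "N \<le> lo"
  shows "split0 (Suc lo) l = split0 (Suc N) l"
proof -
  have z: "\<And>k. N < k \<Longrightarrow> l k = 0" using assms(1) by (auto simp: expvecs_def)
  show ?thesis unfolding split0_def
    by (rule arg_cong[where f=frag_of]) (use z assms(2) in \<open>auto simp: fun_eq_iff\<close>)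
qed

lemma sum_triangle_swap:
  fixes lo N :: nat
  shows "(\<Sum>j\<in>{lo<..N}. \<Sum>k\<in>{j<..N}. g j k) = (\<Sum>k\<in>{lo<..N}. \<Sum>j\<in>{lo<..<k}. g j k)"
proof -
  have "(\<Sum>j\<in>{lo<..N}. \<Sum>k\<in>{k\<in>{lo<..N}. j < k}. g j k) = (\<Sum>k\<in>{lo<..N}. \<Sum>j\<in>{j\<in>{lo<..N}. j < k}. g j k)"
    by (rule sum.swap_restrict) simp_all
  moreover have "\<And>j. j \<in> {lo<..N} \<Longrightarrow> {k\<in>{lo<..N}. j < k} = {j<..N}" by auto
  moreover have "\<And>k. k \<in> {lo<..N} \<Longrightarrow> {j\<in>{lo<..N}. j < k} = {lo<..<k}" by auto
  ultimately show ?thesis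
    by (smt (verit, ccfv_SIG) sum.cong)
qed

lemma DK_kunit [simp]: "DK kunit = 0"
  by (simp add: kunit_def dK_int_def)

lemma DK_psiseq_Cons:
  "DK (psiseq N (l # ls) lo) = (\<Sum>j\<in>{lo<..N}. kmul (split0 j l - split0 (Suc j) l) (psiseq N ls j))
      - (\<Sum>j\<in>{lo<..N}. kmul (psi1 j l) (DK (psiseq N ls j)))"
proof -
  have "DK (psiseq N (l#ls) lo) = (\<Sum>j\<in>{lo<..N}. DK (kmul (psi1 j l) (psiseq N ls j)))"
    by (simp add: DK_sum)
  also have "\<dots> = (\<Sum>j\<in>{lo<..N}. kmul (split0 j l - split0 (Suc j) l) (psiseq N ls j)
      - kmul (psi1 j l) (DK (psiseq N ls j)))"
    by (rule sum.cong[OF refl]) (simp add: DK_kmul[OF keys_psi1] DK_psi1)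
  finally show ?thesis by (simp add: sum_subtractf)
qed

text \<open>The first sum of DK_psiseq_Cons telescopes: the cuts of l between consecutive
  chosen indices collapse to a single cut and a correction term.\<close>
lemma telescope_split0:
  assumes ls: "ls = m # ms"
  shows "(\<Sum>j\<in>{lo<..N}. kmul (split0 j l - split0 (Suc j) l) (psiseq N ls j)) =
     kmul (split0 (Suc lo) l) (psiseq N ls lo)
     - (\<Sum>k\<in>{lo<..N}. kmul (kmul (split0 k l) (psi1 k m)) (psiseq N ms k))"
proof -
  have "(\<Sum>j\<in>{lo<..N}. kmul (split0 j l - split0 (Suc j) l) (psiseq N ls j)) =
      (\<Sum>j\<in>{lo<..N}. \<Sum>k\<in>{j<..N}. kmul (split0 j l - split0 (Suc j) l) (kmul (psi1 k m) (psiseq N ms k)))"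
    by (simp add: ls kmul_sum2)
  also have "\<dots> = (\<Sum>k\<in>{lo<..N}. \<Sum>j\<in>{lo<..<k}.
      kmul (split0 j l - split0 (Suc j) l) (kmul (psi1 k m) (psiseq N ms k)))"
    by (rule sum_triangle_swap)
  also have "\<dots> = (\<Sum>k\<in>{lo<..N}. kmul (split0 (Suc lo) l - split0 k l) (kmul (psi1 k m) (psiseq N ms k)))"
  proof (rule sum.cong[OF refl])
    fix k assume "k \<in> {lo<..N}"
    then have "(\<Sum>j\<in>{lo<..<k}. split0 j l - split0 (Suc j) l) = split0 (Suc lo) l - split0 k l"
      by (intro sum_telescope_below) auto
    then show "(\<Sum>j\<in>{lo<..<k}. kmul (split0 j l - split0 (Suc j) l) (kmul (psi1 k m) (psiseq N ms k))) =
        kmul (split0 (Suc lo) l - split0 k l) (kmul (psi1 k m) (psiseq N ms k))"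
      by (simp add: kmul_sum1[symmetric])
  qed
  also have "\<dots> = kmul (split0 (Suc lo) l) (psiseq N ls lo)
      - (\<Sum>k\<in>{lo<..N}. kmul (kmul (split0 k l) (psi1 k m)) (psiseq N ms k))"
    by (simp add: ls kmul_diff1 sum_subtractf kmul_sum2 kmul_assoc)
  finally show ?thesis .
qed

lemma psi1_times_bdry:
  assumes ls: "ls = m # ms"
  shows "(\<Sum>j\<in>{lo<..N}. kmul (psi1 j l) (psiseq_bdry N ls j)) =
     (\<Sum>j\<in>{lo<..N}. kmul (kmul (psi1 j l) (split0 (Suc j) m)) (psiseq N ms j))
     + (\<Sum>t\<in>{1..<length ls}. frag_cmul ((-1)^t) (psiseq N (l # merge_at t ls) lo))
     + frag_cmul ((-1)^(length ls)) (kmul (psiseq N (l # butlast ls) lo) (split0 (Suc N) (last ls)))"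
proof -
  have A: "(\<Sum>j\<in>{lo<..N}. kmul (psi1 j l) (kmul (split0 (Suc j) (hd ls)) (psiseq N (tl ls) j))) =
      (\<Sum>j\<in>{lo<..N}. kmul (kmul (psi1 j l) (split0 (Suc j) m)) (psiseq N ms j))"
    by (simp add: ls kmul_assoc)
  have "(\<Sum>j\<in>{lo<..N}. kmul (psi1 j l)
      (\<Sum>t\<in>{1..<length ls}. frag_cmul ((-1)^t) (psiseq N (merge_at t ls) j))) =
      (\<Sum>j\<in>{lo<..N}. \<Sum>t\<in>{1..<length ls}. frag_cmul ((-1)^t) (kmul (psi1 j l) (psiseq N (merge_at t ls) j)))"
    by (simp add: kmul_sum2 kmul_cmul2)
  also have "\<dots> = (\<Sum>t\<in>{1..<length ls}. \<Sum>j\<in>{lo<..N}. frag_cmul ((-1)^t) (kmul (psi1 j l) (psiseq N (merge_at t ls) j)))"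
    by (rule sum.swap)
  also have "\<dots> = (\<Sum>t\<in>{1..<length ls}. frag_cmul ((-1)^t) (psiseq N (l # merge_at t ls) lo))"
    by (simp add: frag_cmul_sum)
  finally have B: "(\<Sum>j\<in>{lo<..N}. kmul (psi1 j l)
      (\<Sum>t\<in>{1..<length ls}. frag_cmul ((-1)^t) (psiseq N (merge_at t ls) j))) =
      (\<Sum>t\<in>{1..<length ls}. frag_cmul ((-1)^t) (psiseq N (l # merge_at t ls) lo))" .
  have C: "(\<Sum>j\<in>{lo<..N}. kmul (psi1 j l) (frag_cmul ((-1)^(length ls))
      (kmul (psiseq N (butlast ls) j) (split0 (Suc N) (last ls))))) =
      frag_cmul ((-1)^(length ls)) (kmul (psiseq N (l # butlast ls) lo) (split0 (Suc N) (last ls)))"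
    by (simp add: kmul_cmul2 frag_cmul_sum kmul_sum1 kmul_assoc)
  show ?thesis
    unfolding psiseq_bdry_def kmul_add2 sum.distrib A B C ..
qed

lemma sum_merge_at_Cons:
  assumes ls: "ls = m # ms"
  shows "(\<Sum>t\<in>{1..<length (l # ls)}. frag_cmul ((-1)^t) (psiseq N (merge_at t (l # ls)) lo)) =
     - psiseq N (madd l m # ms) lo
     - (\<Sum>t\<in>{1..<length ls}. frag_cmul ((-1)^t) (psiseq N (l # merge_at t ls) lo))"
proof -
  have "(\<Sum>t\<in>{1..<length (l # ls)}. frag_cmul ((-1)^t) (psiseq N (merge_at t (l # ls)) lo)) =
      frag_cmul ((-1)^1) (psiseq N (merge_at 1 (l # ls)) lo)
      + (\<Sum>t\<in>{Suc 1..<Suc (length ls)}. frag_cmul ((-1)^t) (psiseq N (merge_at t (l # ls)) lo))"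
    using ls by (subst sum.atLeast_Suc_lessThan) auto
  also have "(\<Sum>t\<in>{Suc 1..<Suc (length ls)}. frag_cmul ((-1)^t) (psiseq N (merge_at t (l # ls)) lo)) =
      (\<Sum>t\<in>{1..<length ls}. frag_cmul ((-1)^(Suc t)) (psiseq N (merge_at (Suc t) (l # ls)) lo))"
    by (rule sum.shift_bounds_Suc_ivl)
  also have "\<dots> = - (\<Sum>t\<in>{1..<length ls}. frag_cmul ((-1)^t) (psiseq N (l # merge_at t ls) lo))"
    by (simp add: sum_negf[symmetric] merge_at_Suc del: minus_frag_cmul)
       (rule sum.cong, auto simp: merge_at_Suc)
  finally show ?thesis by (simp add: ls merge_at_1 del: minus_frag_cmul)
qed

text \<open>The
  boundary of the first factor psi1 telescopes to the two outer bar faces and the merge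
  of the first two factors; the boundary of the tail contributes the other merges.\<close>
lemma DK_psiseq:
  assumes "ls \<noteq> []" "set ls \<subseteq> expvecs N"
  shows "DK (psiseq N ls lo) = psiseq_bdry N ls lo"
  using assms
proof (induction ls arbitrary: lo)
  case Nil then show ?case by simp
next
  case (Cons l ls)
  have lE: "l \<in> expvecs N" using Cons.prems by simp
  show ?case
  proof (cases ls)
    case Nil
    have "DK (psiseq N (l # ls) lo) = (\<Sum>j\<in>{lo<..N}. split0 j l - split0 (Suc j) l)"
      using DK_psiseq_Cons[of N l ls lo] Nil by simp
    also have "\<dots> = split0 (Suc lo) l - split0 (Suc N) l"
    proof (cases "lo \<le> N")
      case True then show ?thesis by (rule sum_telescope_upto)
    next
      case False then show ?thesis using split0_high[OF lE, of lo] by simp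
    qed
    finally show ?thesis using Nil by (simp add: psiseq_bdry_def)
  next
    case (Cons m ms)
    have IH: "\<And>j. DK (psiseq N ls j) = psiseq_bdry N ls j" using Cons.IH Cons.prems \<open>ls = m # ms\<close> by simp
    have merge: "(\<Sum>k\<in>{lo<..N}. kmul (kmul (split0 k l) (psi1 k m)) (psiseq N ms k)) +
        (\<Sum>j\<in>{lo<..N}. kmul (kmul (psi1 j l) (split0 (Suc j) m)) (psiseq N ms j)) = psiseq N (madd l m # ms) lo"
      by (simp add: psi1_madd kmul_add1 sum.distrib add.commute)
    have last: "frag_cmul ((-1)^(length (l # ls))) (kmul (psiseq N (butlast (l # ls)) lo) (split0 (Suc N) (last (l # ls)))) =
        - frag_cmul ((-1)^(length ls)) (kmul (psiseq N (l # butlast ls) lo) (split0 (Suc N) (last ls)))"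
      using Cons by (simp del: minus_frag_cmul add: minus_frag_cmul[symmetric])
    show ?thesis
      unfolding DK_psiseq_Cons IH telescope_split0[OF Cons] psi1_times_bdry[OF Cons]
        psiseq_bdry_def[of N "l # ls"] sum_merge_at_Cons[OF Cons] last merge[symmetric]
      by (simp add: algebra_simps frag_cmul_distrib[symmetric])
  qed
qed

definition incseqs_from :: "nat \<Rightarrow> nat \<Rightarrow> nat \<Rightarrow> nat list set" where
  "incseqs_from N lo p = {js. length js = p \<and> sorted_wrt (<) js \<and> set js \<subseteq> {lo<..N}}"

lemma incseqs_from_0: "incseqs_from N lo 0 = {[]}" by (auto simp: incseqs_from_def)

lemma incseqs_from_Suc: "incseqs_from N lo (Suc p) = (\<lambda>(j,js). j # js) ` (SIGMA j:{lo<..N}. incseqs_from N j p)"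
proof (rule set_eqI)
  fix xs
  show "xs \<in> incseqs_from N lo (Suc p) \<longleftrightarrow> xs \<in> (\<lambda>(j,js). j # js) ` (SIGMA j:{lo<..N}. incseqs_from N j p)"
  proof (cases xs)
    case Nil then show ?thesis by (auto simp: incseqs_from_def)
  next
    case (Cons j js)
    have "xs \<in> incseqs_from N lo (Suc p) \<longleftrightarrow> j \<in> {lo<..N} \<and> js \<in> incseqs_from N j p"
      by (auto simp: incseqs_from_def Cons)
    then show ?thesis by (auto simp: Cons image_iff)
  qed
qed

lemma finite_incseqs_from: "finite (incseqs_from N lo p)"
proof -
  have "incseqs_from N lo p \<subseteq> {js. set js \<subseteq> {lo<..N} \<and> length js = p}" by (auto simp: incseqs_from_def)
  then show ?thesis using finite_lists_length_eq[of "{lo<..N}" p] finite_subset by auto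
qed

lemma rsets_Nil: "rsets [] [] = {[]}" by (auto simp: rsets_def)

lemma rsets_Cons:
  "rsets (l # ls) (j # js) = (\<lambda>(r,rs). r # rs) ` ({..<l j} \<times> rsets ls js)"
proof (rule set_eqI)
  fix xs
  show "xs \<in> rsets (l # ls) (j # js) \<longleftrightarrow> xs \<in> (\<lambda>(r,rs). r # rs) ` ({..<l j} \<times> rsets ls js)"
  proof (cases xs)
    case Nil then show ?thesis by (auto simp: rsets_def)
  next
    case (Cons r rs)
    have "xs \<in> rsets (l # ls) (j # js) \<longleftrightarrow> r < l j \<and> rs \<in> rsets ls js"
      by (auto simp: rsets_def Cons All_less_Suc2)
    then show ?thesis by (auto simp: Cons image_iff)
  qed
qed

definition Qterm :: "expv list \<Rightarrow> nat list \<Rightarrow> nat list \<Rightarrow> kb \<Rightarrow>\<^sub>0 int" where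
  "Qterm ls js rs = frag_of (Qvec ls js rs, js, Qhat ls js rs)"

lemma Qterm_Cons:
  assumes "admissible (l # ls) (j # js) (r # rs)"
  shows "Qterm (l # ls) (j # js) (r # rs) = kmul (frag_of (Qleft l j r, [j], Qright l j r)) (Qterm ls js rs)"
proof -
  have s: "sorted_wrt (<) (j # js)" and len: "length ls = length js" "length rs = length js"
    using assms by (auto simp: admissible_def)
  show ?thesis by (simp add: Qterm_def Qvec_Cons[OF s len] Qhat_Cons[OF assms])
qed

lemma sum_rsets_Cons:
  assumes "sorted_wrt (<) (j # js)" "length ls = length js"
  shows "(\<Sum>rs\<in>rsets (l # ls) (j # js). Qterm (l # ls) (j # js) rs) =
     kmul (psi1 j l) (\<Sum>rs\<in>rsets ls js. Qterm ls js rs)"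
proof -
  have inj: "inj_on (\<lambda>(r,rs). r # rs) ({..<l j} \<times> rsets ls js)" by (auto simp: inj_on_def)
  have "(\<Sum>rs\<in>rsets (l # ls) (j # js). Qterm (l # ls) (j # js) rs) =
      (\<Sum>r<l j. \<Sum>rs\<in>rsets ls js. Qterm (l # ls) (j # js) (r # rs))"
    unfolding rsets_Cons sum.reindex[OF inj] sum.cartesian_product' by (simp add: split_def)
  also have "\<dots> = (\<Sum>r<l j. \<Sum>rs\<in>rsets ls js. kmul (frag_of (Qleft l j r, [j], Qright l j r)) (Qterm ls js rs))"
  proof (intro sum.cong refl)
    fix r rs assume r: "r \<in> {..<l j}" and rs: "rs \<in> rsets ls js"
    have "admissible ls js rs" using assms rs by (auto simp: admissible_def rsets_def)
    then have "admissible (l # ls) (j # js) (r # rs)" using assms(1) r by (simp add: admissible_Cons)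
    then show "Qterm (l # ls) (j # js) (r # rs) = kmul (frag_of (Qleft l j r, [j], Qright l j r)) (Qterm ls js rs)"
      by (rule Qterm_Cons)
  qed
  also have "\<dots> = kmul (psi1 j l) (\<Sum>rs\<in>rsets ls js. Qterm ls js rs)"
    by (simp add: psi1_def kmul_sum1 kmul_sum2 finite_rsets sum.swap[of _ "rsets ls js"])
  finally show ?thesis .
qed

lemma psiseq_closed_form:
  "length ls = p \<Longrightarrow> (\<Sum>js\<in>incseqs_from N lo p. \<Sum>rs\<in>rsets ls js. Qterm ls js rs) = psiseq N ls lo"
proof (induction ls arbitrary: lo p)
  case Nil
  then show ?case by (simp add: incseqs_from_0 rsets_Nil Qterm_def Qvec_Nil Qhat_Nil kunit_def)
next
  case (Cons l ls)
  then obtain p' where p: "p = Suc p'" "length ls = p'" by auto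
  have inj: "inj_on (\<lambda>(j,js). j # js) (SIGMA j:{lo<..N}. incseqs_from N j p')" by (auto simp: inj_on_def)
  have "(\<Sum>js\<in>incseqs_from N lo p. \<Sum>rs\<in>rsets (l # ls) js. Qterm (l # ls) js rs) =
      (\<Sum>j\<in>{lo<..N}. \<Sum>js\<in>incseqs_from N j p'. \<Sum>rs\<in>rsets (l # ls) (j # js). Qterm (l # ls) (j # js) rs)"
    unfolding p incseqs_from_Suc sum.reindex[OF inj]
    by (subst (2) sum.Sigma) (simp_all add: finite_incseqs_from split_def)
  also have "\<dots> = (\<Sum>j\<in>{lo<..N}. \<Sum>js\<in>incseqs_from N j p'. kmul (psi1 j l) (\<Sum>rs\<in>rsets ls js. Qterm ls js rs))"
    using p(2) by (intro sum.cong refl sum_rsets_Cons) (auto simp: incseqs_from_def)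
  also have "\<dots> = (\<Sum>j\<in>{lo<..N}. kmul (psi1 j l)
      (\<Sum>js\<in>incseqs_from N j p'. \<Sum>rs\<in>rsets ls js. Qterm ls js rs))"
    by (simp only: kmul_sum2[OF finite_incseqs_from])
  also have "\<dots> = (\<Sum>j\<in>{lo<..N}. kmul (psi1 j l) (psiseq N ls j))"
    by (simp only: Cons.IH[OF p(2)])
  finally show ?case by simp
qed

definition bact :: "expv \<Rightarrow> expv \<Rightarrow> (kb \<Rightarrow>\<^sub>0 int) \<Rightarrow> kb \<Rightarrow>\<^sub>0 int" where
  "bact a b X = kmul (frag_of (a, [], mzero)) (kmul X (frag_of (mzero, [], b)))"

lemma bact_of: "bact a b (frag_of (c, J, d)) = frag_of (madd a c, J, madd d b)"
  by (simp add: bact_def)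

lemma bact_sum: "finite I \<Longrightarrow> bact a b (\<Sum>i\<in>I. f i) = (\<Sum>i\<in>I. bact a b (f i))"
  by (simp add: bact_def kmul_sum1 kmul_sum2)

lemma incseqs_eq_from: "incseqs N p = incseqs_from N 0 p"
  by (auto simp: incseqs_def incseqs_from_def)

lemma Psi_int_eq: "Psi_int N (a, ls, b) = bact a b (psiseq N ls 0)"
proof (cases "ls = []")
  case True then show ?thesis by (simp add: Psi_int_def bact_def kunit_def)
next
  case False
  have "Psi_int N (a, ls, b) = (\<Sum>js\<in>incseqs_from N 0 (length ls). \<Sum>rs\<in>rsets ls js. frag_of (madd a (Qvec ls js rs), js, madd (Qhat ls js rs) b))"
    using False by (simp add: Psi_int_def incseqs_eq_from) (subst sum.Sigma, simp_all add: finite_incseqs_from finite_rsets split_def)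
  also have "\<dots> = bact a b (psiseq N ls 0)"
    unfolding psiseq_closed_form[OF refl, symmetric]
    by (simp add: bact_sum finite_incseqs_from finite_rsets bact_of Qterm_def)
  finally show ?thesis .
qed

text \<open>Degree-0 factors commute with DK, so DK commutes with the bimodule action.\<close>
lemma dK_int_nil [simp]: "dK_int (c, [], d) = 0" by (simp add: dK_int_def)

lemma DK_kmul_right0: "DK (kmul X (frag_of (c, [], d))) = kmul (DK X) (frag_of (c, [], d))"
  using subset_UNIV
  by (induction X rule: frag_induction)
     (auto simp: dK_int_kcat kmul_diff1 DK_diff kmul_of_right[symmetric])

lemma DK_kmul_left0: "DK (kmul (frag_of (c, [], d)) X) = kmul (frag_of (c, [], d)) (DK X)"
  using DK_kmul_of[of "(c,[],d)" X] by (simp add: kdeg_def)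

lemma DK_bact: "DK (bact a b X) = bact a b (DK X)"
  by (simp add: bact_def DK_kmul_left0 DK_kmul_right0)

lemma bact_add: "bact a b (X + Y) = bact a b X + bact a b Y" by (simp add: bact_def kmul_add1 kmul_add2)
lemma bact_cmul: "bact a b (frag_cmul c X) = frag_cmul c (bact a b X)" by (simp add: bact_def kmul_cmul1 kmul_cmul2)

lemma split0_first: "l \<in> expvecs N \<Longrightarrow> split0 (Suc 0) l = frag_of (l, [], mzero)"
  unfolding split0_def by (rule arg_cong[where f=frag_of]) (auto simp: expvecs_def mzero_def fun_eq_iff)

lemma split0_last: "l \<in> expvecs N \<Longrightarrow> split0 (Suc N) l = frag_of (mzero, [], l)"
  unfolding split0_def by (rule arg_cong[where f=frag_of]) (auto simp: expvecs_def mzero_def fun_eq_iff)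

lemma bact_left: "bact a b (kmul (frag_of (l, [], mzero)) X) = bact (madd a l) b X"
  by (simp add: bact_def kmul_assoc[symmetric])

lemma bact_right: "bact a b (kmul X (frag_of (mzero, [], l))) = bact a (madd l b) X"
  by (simp add: bact_def kmul_assoc)

lemma bar_of_list_snoc: "bar_of_list (x # ys @ [y]) = (x, ys, y)"
  by (simp add: bar_of_list_def)

lemma sum_atMost_split:
  fixes f :: "nat \<Rightarrow> 'a::comm_monoid_add"
  assumes "1 \<le> p"
  shows "(\<Sum>i\<le>p. f i) = f 0 + (\<Sum>i\<in>{1..<p}. f i) + f p"
proof -
  have "{..p} = insert 0 (insert p {1..<p})" using assms by auto
  then show ?thesis using assms by (simp add: add_ac)
qed

lemma dB_int_split:
  assumes "ls \<noteq> []"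
  shows "dB_int (a, ls, b) = frag_of (madd a (hd ls), tl ls, b)
     + (\<Sum>t\<in>{1..<length ls}. frag_cmul ((-1)^t) (frag_of (a, merge_at t ls, b)))
     + frag_cmul ((-1)^(length ls)) (frag_of (a, butlast ls, madd (last ls) b))"
proof -
  define L where "L = a # ls @ [b]"
  define f where "f i = frag_cmul ((-1) ^ i) (frag_of (bar_of_list (take i L @ [madd (L ! i) (L ! Suc i)] @ drop (Suc (Suc i)) L)))" for i
  have p1: "1 \<le> length ls" using assms by (cases ls) auto
  have "dB_int (a, ls, b) = (\<Sum>i\<le>length ls. f i)" by (simp add: dB_int_def L_def f_def Let_def)
  also have "\<dots> = f 0 + (\<Sum>i\<in>{1..<length ls}. f i) + f (length ls)" by (rule sum_atMost_split[OF p1])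
  also have "f 0 = frag_of (madd a (hd ls), tl ls, b)"
  proof -
    have "take 0 L @ [madd (L ! 0) (L ! Suc 0)] @ drop (Suc (Suc 0)) L = madd a (hd ls) # tl ls @ [b]"
      using assms by (cases ls) (auto simp: L_def)
    then show ?thesis by (simp add: f_def bar_of_list_snoc)
  qed
  also have "(\<Sum>i\<in>{1..<length ls}. f i) = (\<Sum>t\<in>{1..<length ls}. frag_cmul ((-1)^t) (frag_of (a, merge_at t ls, b)))"
  proof (rule sum.cong[OF refl])
    fix i assume i: "i \<in> {1..<length ls}"
    then obtain i' where i': "i = Suc i'" by (cases i) auto
    have "take i L @ [madd (L ! i) (L ! Suc i)] @ drop (Suc (Suc i)) L = a # merge_at i ls @ [b]"
      using i by (simp add: L_def i' merge_at_def nth_append)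
    then show "f i = frag_cmul ((-1)^i) (frag_of (a, merge_at i ls, b))" by (simp add: f_def bar_of_list_snoc)
  qed
  also have "f (length ls) = frag_cmul ((-1)^(length ls)) (frag_of (a, butlast ls, madd (last ls) b))"
  proof -
    obtain n where n: "length ls = Suc n" using p1 by (cases "length ls") auto
    have "take (length ls) L @ [madd (L ! length ls) (L ! Suc (length ls))] @ drop (Suc (Suc (length ls))) L
        = a # butlast ls @ [madd (last ls) b]"
      using assms n by (simp add: L_def nth_append butlast_conv_take last_conv_nth)
    then show ?thesis by (simp add: f_def bar_of_list_snoc)
  qed
  finally show ?thesis .
qed

text \<open>The integer Psi is a chain map: the boundary formula psiseq_bdry is exactly Psi applied
  to the bar differential.\<close>
lemma Psi_int_chain:
  assumes "ls \<noteq> []" "set ls \<subseteq> expvecs N"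
  shows "frag_extend dK_int (Psi_int N (a, ls, b)) = frag_extend (Psi_int N) (dB_int (a, ls, b))"
proof -
  have hd: "hd ls \<in> expvecs N" and la: "last ls \<in> expvecs N" using assms by auto
  have "frag_extend dK_int (Psi_int N (a, ls, b)) = bact a b (psiseq_bdry N ls 0)"
    unfolding DK_def[symmetric] Psi_int_eq DK_bact DK_psiseq[OF assms] ..
  also have "\<dots> = frag_extend (Psi_int N) (dB_int (a, ls, b))"
    unfolding psiseq_bdry_def dB_int_split[OF assms(1)]
    by (simp add: frag_extend_add frag_extend_sum frag_extend_cmul bact_add bact_cmul bact_sum Psi_int_eq
        split0_first[OF hd] split0_last[OF la] bact_left bact_right comp_def)
  finally show ?thesis .
qed

section \<open>The integer Phi is a chain map\<close>

text \<open>cyc i is the cycle 0 \<mapsto> i \<mapsto> i-1 \<mapsto> \<dots> \<mapsto> 1 \<mapsto> 0 of sign (-1)^i.\<close>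
fun cyc :: "nat \<Rightarrow> nat \<Rightarrow> nat" where
  "cyc 0 = id"
| "cyc (Suc i) = Transposition.transpose i (Suc i) \<circ> cyc i"

lemma cyc_apply: "cyc i k = (if k = 0 then i else if k \<le> i then k - 1 else k)"
  by (induction i arbitrary: k) (auto simp: transpose_def)

lemma cyc_permutes: "cyc i permutes {0..i}"
proof (induction i)
  case 0 then show ?case by (simp add: permutes_id id_def[symmetric])
next
  case (Suc i)
  have "cyc i permutes {0..Suc i}" by (rule permutes_subset[OF Suc]) auto
  moreover have "Transposition.transpose i (Suc i) permutes {0..Suc i}" by (rule permutes_swap_id) auto
  ultimately show ?case by (simp only: cyc.simps) (rule permutes_compose)
qed

lemma sign_cyc: "sign (cyc i) = (-1) ^ i"
proof (induction i)
  case 0 then show ?case by simp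
next
  case (Suc i)
  have "permutation (cyc i)" using cyc_permutes[of i] by (meson finite_atLeastAtMost permutes_imp_permutation)
  then have "sign (cyc (Suc i)) = sign (Transposition.transpose i (Suc i)) * sign (cyc i)"
    by (simp only: cyc.simps) (rule sign_compose[OF permutation_swap_id])
  then show ?case by (simp only: Suc.IH sign_swap_id) simp
qed

definition lift_perm :: "(nat \<Rightarrow> nat) \<Rightarrow> nat \<Rightarrow> nat" where
  "lift_perm \<sigma> = (\<lambda>k. if k = 0 then 0 else Suc (\<sigma> (k - 1)))"

lemma lift_perm_perm:
  assumes "\<sigma> permutes {0..<n}"
  shows "lift_perm \<sigma> permutes {0..<Suc n} \<and> sign (lift_perm \<sigma>) = sign \<sigma>"
  using assms finite_atLeastLessThan
proof (induction rule: permutes_induct)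
  case id
  have "lift_perm id = id" by (auto simp: lift_perm_def fun_eq_iff)
  then show ?case by (simp add: permutes_id id_def[symmetric])
next
  case (swap a b p)
  have e: "lift_perm (Transposition.transpose a b \<circ> p) = Transposition.transpose (Suc a) (Suc b) \<circ> lift_perm p"
    by (auto simp: lift_perm_def fun_eq_iff transpose_def)
  have e1: "lift_perm p permutes {0..<Suc n}" and e2: "sign (lift_perm p) = sign p" using swap.IH by auto
  have pp: "permutation (lift_perm p)" using e1 by (meson finite_atLeastLessThan permutes_imp_permutation)
  have pp': "permutation p" using \<open>p permutes {0..<n}\<close> by (meson finite_atLeastLessThan permutes_imp_permutation)
  have T: "Transposition.transpose (Suc a) (Suc b) permutes {0..<Suc n}"
    using \<open>a \<in> {0..<n}\<close> \<open>b \<in> {0..<n}\<close> by (intro permutes_swap_id) auto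
  have s1: "sign (Transposition.transpose (Suc a) (Suc b) \<circ> lift_perm p) = - sign p"
    using sign_compose[OF permutation_swap_id pp, of "Suc a" "Suc b"] \<open>a \<noteq> b\<close> e2 by (simp add: sign_swap_id)
  have s2: "sign (Transposition.transpose a b \<circ> p) = - sign p"
    using sign_compose[OF permutation_swap_id pp', of a b] \<open>a \<noteq> b\<close> by (simp add: sign_swap_id)
  show ?case unfolding e s1 s2 using permutes_compose[OF e1 T] by (simp only: simp_thms)
qed

text \<open>skip i enumerates {0..} without i; insert_perm i \<sigma> is the permutation with first
  letter i and remaining letters ordered by \<sigma>, of sign (-1)^i sign \<sigma>.\<close>
definition skip :: "nat \<Rightarrow> nat \<Rightarrow> nat" where "skip i m = (if m < i then m else Suc m)"

definition insert_perm :: "nat \<Rightarrow> (nat \<Rightarrow> nat) \<Rightarrow> nat \<Rightarrow> nat" where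
  "insert_perm i \<sigma> = cyc i \<circ> lift_perm \<sigma>"

lemma insert_perm_0 [simp]: "insert_perm i \<sigma> 0 = i"
  by (simp add: insert_perm_def lift_perm_def cyc_apply)

lemma insert_perm_Suc [simp]: "insert_perm i \<sigma> (Suc k) = skip i (\<sigma> k)"
  by (simp add: insert_perm_def lift_perm_def cyc_apply skip_def)

lemma insert_perm_perm:
  assumes "i < Suc n" "\<sigma> permutes {0..<n}"
  shows "insert_perm i \<sigma> permutes {0..<Suc n} \<and> sign (insert_perm i \<sigma>) = (-1)^i * sign \<sigma>"
proof -
  have c: "cyc i permutes {0..<Suc n}" by (rule permutes_subset[OF cyc_permutes]) (use assms in auto)
  have e: "lift_perm \<sigma> permutes {0..<Suc n}" "sign (lift_perm \<sigma>) = sign \<sigma>" using lift_perm_perm[OF assms(2)] by auto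
  have "permutation (cyc i)" "permutation (lift_perm \<sigma>)"
    using c e(1) by (auto intro: permutes_imp_permutation)
  then show ?thesis using c e by (simp add: insert_perm_def permutes_compose sign_compose sign_cyc)
qed

lemma bij_from_card:
  assumes "inj_on f A" "f ` A \<subseteq> B" "finite B" "card A = card B"
  shows "bij_betw f A B"
proof -
  have "card (f ` A) = card B" using assms(1,4) by (simp add: card_image)
  then have "f ` A = B" using assms(2,3) by (simp add: card_subset_eq)
  then show ?thesis using assms(1) by (simp add: bij_betw_def)
qed

lemma insert_perm_bij:
  "bij_betw (\<lambda>(i,\<sigma>). insert_perm i \<sigma>) ({..<Suc n} \<times> {\<sigma>. \<sigma> permutes {0..<n}}) {\<pi>. \<pi> permutes {0..<Suc n}}"
proof (rule bij_from_card)
  show "inj_on (\<lambda>(i,\<sigma>). insert_perm i \<sigma>) ({..<Suc n} \<times> {\<sigma>. \<sigma> permutes {0..<n}})"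
  proof (rule inj_onI, clarify)
    fix i \<sigma> i' \<sigma>' assume eq: "insert_perm i \<sigma> = insert_perm i' \<sigma>'"
    have ii: "i = i'" using fun_cong[OF eq, of 0] by simp
    have "\<sigma> k = \<sigma>' k" for k
      using fun_cong[OF eq, of "Suc k"] ii by (auto simp: skip_def split: if_splits)
    then show "i = i' \<and> \<sigma> = \<sigma>'" using ii by auto
  qed
  show "(\<lambda>(i,\<sigma>). insert_perm i \<sigma>) ` ({..<Suc n} \<times> {\<sigma>. \<sigma> permutes {0..<n}}) \<subseteq> {\<pi>. \<pi> permutes {0..<Suc n}}"
    using insert_perm_perm by auto
  show "finite {\<pi>. \<pi> permutes {0..<Suc n}}" by (simp add: finite_permutations)
  show "card ({..<Suc n} \<times> {\<sigma>. \<sigma> permutes {0..<n}}) = card {\<pi>. \<pi> permutes {0..<Suc n}}"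
    by (simp add: card_cartesian_product card_permutations)
qed

lemma sum_perms_by_first:
  "(\<Sum>\<pi>\<in>{\<pi>. \<pi> permutes {0..<Suc n}}. frag_cmul (sign \<pi>) (G (\<pi> 0) (map (\<lambda>k. \<pi> (Suc k)) [0..<n]))) =
   (\<Sum>i<Suc n. frag_cmul ((-1)^i) (\<Sum>\<sigma>\<in>{\<sigma>. \<sigma> permutes {0..<n}}. frag_cmul (sign \<sigma>) (G i (map (\<lambda>k. skip i (\<sigma> k)) [0..<n]))))"
proof -
  have "(\<Sum>\<pi>\<in>{\<pi>. \<pi> permutes {0..<Suc n}}. frag_cmul (sign \<pi>) (G (\<pi> 0) (map (\<lambda>k. \<pi> (Suc k)) [0..<n]))) =
    (\<Sum>x\<in>{..<Suc n} \<times> {\<sigma>. \<sigma> permutes {0..<n}}. frag_cmul (sign (insert_perm (fst x) (snd x)))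
        (G (insert_perm (fst x) (snd x) 0) (map (\<lambda>k. insert_perm (fst x) (snd x) (Suc k)) [0..<n])))"
    by (subst sum.reindex_bij_betw[OF insert_perm_bij, symmetric]) (simp add: split_def)
  also have "\<dots> = (\<Sum>x\<in>{..<Suc n} \<times> {\<sigma>. \<sigma> permutes {0..<n}}. frag_cmul ((-1)^(fst x) * sign (snd x))
        (G (fst x) (map (\<lambda>k. skip (fst x) (snd x k)) [0..<n])))"
    by (rule sum.cong[OF refl]) (auto simp: insert_perm_perm)
  also have "\<dots> = (\<Sum>i<Suc n. frag_cmul ((-1)^i) (\<Sum>\<sigma>\<in>{\<sigma>. \<sigma> permutes {0..<n}}. frag_cmul (sign \<sigma>) (G i (map (\<lambda>k. skip i (\<sigma> k)) [0..<n]))))"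
    by (simp add: sum.cartesian_product' frag_cmul_sum)
  finally show ?thesis .
qed

lemma sum_perms_by_last:
  "(\<Sum>\<pi>\<in>{\<pi>. \<pi> permutes {0..<Suc n}}. frag_cmul (sign \<pi>) (G (\<pi> n) (map \<pi> [0..<n]))) =
   frag_cmul ((-1)^n) (\<Sum>i<Suc n. frag_cmul ((-1)^i) (\<Sum>\<sigma>\<in>{\<sigma>. \<sigma> permutes {0..<n}}. frag_cmul (sign \<sigma>) (G i (map (\<lambda>k. skip i (\<sigma> k)) [0..<n]))))"
proof -
  define c where "c = cyc n"
  have cp: "c permutes {0..<Suc n}" unfolding c_def by (rule permutes_subset[OF cyc_permutes]) auto
  have cperm: "permutation c" using cp by (auto intro: permutes_imp_permutation)
  have "(\<Sum>\<pi>\<in>{\<pi>. \<pi> permutes {0..<Suc n}}. frag_cmul (sign \<pi>) (G (\<pi> 0) (map (\<lambda>k. \<pi> (Suc k)) [0..<n]))) =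
        (\<Sum>\<pi>\<in>{\<pi>. \<pi> permutes {0..<Suc n}}. frag_cmul (sign (\<pi> \<circ> c)) (G ((\<pi> \<circ> c) 0) (map (\<lambda>k. (\<pi> \<circ> c) (Suc k)) [0..<n])))"
    by (rule sum_permutations_compose_right[OF cp])
  also have "\<dots> = frag_cmul ((-1)^n) (\<Sum>\<pi>\<in>{\<pi>. \<pi> permutes {0..<Suc n}}. frag_cmul (sign \<pi>) (G (\<pi> n) (map \<pi> [0..<n])))"
  proof -
    have "\<And>\<pi>. \<pi> permutes {0..<Suc n} \<Longrightarrow> frag_cmul (sign (\<pi> \<circ> c)) (G ((\<pi> \<circ> c) 0) (map (\<lambda>k. (\<pi> \<circ> c) (Suc k)) [0..<n]))
        = frag_cmul ((-1)^n) (frag_cmul (sign \<pi>) (G (\<pi> n) (map \<pi> [0..<n])))"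
    proof -
      fix \<pi> assume p: "\<pi> permutes {0..<Suc n}"
      have "permutation \<pi>" using p by (auto intro: permutes_imp_permutation)
      then have s: "sign (\<pi> \<circ> c) = sign \<pi> * (-1)^n" using cperm by (simp add: sign_compose c_def sign_cyc)
      have m: "map (\<lambda>k. (\<pi> \<circ> c) (Suc k)) [0..<n] = map \<pi> [0..<n]"
        by (auto simp: c_def cyc_apply)
      show "frag_cmul (sign (\<pi> \<circ> c)) (G ((\<pi> \<circ> c) 0) (map (\<lambda>k. (\<pi> \<circ> c) (Suc k)) [0..<n]))
        = frag_cmul ((-1)^n) (frag_cmul (sign \<pi>) (G (\<pi> n) (map \<pi> [0..<n])))"
        unfolding s m by (simp add: c_def cyc_apply mult.commute)
    qed
    then show ?thesis by (simp add: frag_cmul_sum)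
  qed
  finally have "(\<Sum>\<pi>\<in>{\<pi>. \<pi> permutes {0..<Suc n}}. frag_cmul (sign \<pi>) (G (\<pi> 0) (map (\<lambda>k. \<pi> (Suc k)) [0..<n]))) =
      frag_cmul ((-1)^n) (\<Sum>\<pi>\<in>{\<pi>. \<pi> permutes {0..<Suc n}}. frag_cmul (sign \<pi>) (G (\<pi> n) (map \<pi> [0..<n])))" .
  then have "frag_cmul ((-1)^n) (\<Sum>\<pi>\<in>{\<pi>. \<pi> permutes {0..<Suc n}}. frag_cmul (sign \<pi>) (G (\<pi> 0) (map (\<lambda>k. \<pi> (Suc k)) [0..<n]))) =
      (\<Sum>\<pi>\<in>{\<pi>. \<pi> permutes {0..<Suc n}}. frag_cmul (sign \<pi>) (G (\<pi> n) (map \<pi> [0..<n])))"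
    by (simp add: power_mult_distrib[symmetric])
  then show ?thesis unfolding sum_perms_by_first by simp
qed

lemma merge_at_map:
  assumes "1 \<le> t" "t < p"
  shows "merge_at t (map f [0..<p]) = map f [0..<t - 1] @ [madd (f (t - 1)) (f t)] @ map f [Suc t..<p]"
  using assms by (simp add: merge_at_def take_map drop_map)

text \<open>Composing with the transposition of t-1 and t leaves the merged word unchanged but
  flips the sign, so the signed sum vanishes.\<close>
lemma interior_zero:
  assumes "1 \<le> t" "t < length js"
  shows "(\<Sum>\<pi>\<in>{\<pi>. \<pi> permutes {0..<length js}}. frag_cmul (sign \<pi>) (frag_of (a, merge_at t (pword js \<pi>), b))) = 0"
proof -
  define p where "p = length js"
  define \<tau> where "\<tau> = Transposition.transpose (t - 1) t"
  have tp: "\<tau> permutes {0..<p}" using assms by (auto simp: \<tau>_def p_def intro!: permutes_swap_id)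
  have tperm: "permutation \<tau>" using tp by (auto intro: permutes_imp_permutation)
  define F where "F \<pi> = frag_cmul (sign \<pi>) (frag_of (a, merge_at t (pword js \<pi>), b))" for \<pi>
  have neg: "F (\<pi> \<circ> \<tau>) = - F \<pi>" if "\<pi> permutes {0..<p}" for \<pi>
  proof -
    have "permutation \<pi>" using that by (auto intro: permutes_imp_permutation)
    then have s: "sign (\<pi> \<circ> \<tau>) = - sign \<pi>"
      using sign_compose[OF _ tperm, of \<pi>] assms unfolding \<tau>_def by (simp add: sign_swap_id)
    have m: "merge_at t (pword js (\<pi> \<circ> \<tau>)) = merge_at t (pword js \<pi>)"
      using assms unfolding pword_def p_def[symmetric] merge_at_map[OF assms(1) assms(2)[folded p_def]]
      by (auto simp: \<tau>_def transpose_def madd_commute)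
    show ?thesis unfolding F_def s m by simp
  qed
  have "(\<Sum>\<pi>\<in>{\<pi>. \<pi> permutes {0..<p}}. F \<pi>) = (\<Sum>\<pi>\<in>{\<pi>. \<pi> permutes {0..<p}}. F (\<pi> \<circ> \<tau>))"
    by (rule sum_permutations_compose_right[OF tp])
  also have "\<dots> = - (\<Sum>\<pi>\<in>{\<pi>. \<pi> permutes {0..<p}}. F \<pi>)"
    by (simp add: neg sum_negf)
  finally show ?thesis using frag_self_neg by (simp add: F_def p_def)
qed

lemma del_at_nth_skip:
  assumes "m < length js - 1" "i < length js"
  shows "del_at i js ! m = js ! skip i m"
  using assms by (auto simp: del_at_def skip_def nth_append min_def)

lemma Phi_int_del_at:
  assumes "i < Suc n" "length js = Suc n"
  shows "Phi_int (c, del_at i js, d) = (\<Sum>\<sigma>\<in>{\<sigma>. \<sigma> permutes {0..<n}}. frag_cmul (sign \<sigma>)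
           (frag_of (c, map (\<lambda>k. unitv (js ! (skip i (\<sigma> k)))) [0..<n], d)))"
proof -
  have l: "length (del_at i js) = n" using assms by (simp add: del_at_def)
  show ?thesis unfolding Phi_int_def prod.case l
  proof (intro sum.cong refl arg_cong[where f="frag_cmul _"] arg_cong[where f=frag_of])
    fix \<sigma> assume "\<sigma> \<in> {\<sigma>. \<sigma> permutes {0..<n}}"
    then have "\<And>k. k < n \<Longrightarrow> \<sigma> k < n" by (auto dest: permutes_in_image)
    then show "(c, pword (del_at i js) \<sigma>, d) = (c, map (\<lambda>k. unitv (js ! skip i (\<sigma> k))) [0..<n], d)"
      using assms by (auto simp: pword_def l del_at_nth_skip)
  qed
qed

lemma dB_int_pword:
  assumes "length js = Suc n"
  shows "dB_int (a, pword js \<pi>, b) =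
      frag_of (madd a (unitv (js ! \<pi> 0)), map (\<lambda>k. unitv (js ! \<pi> (Suc k))) [0..<n], b)
      + (\<Sum>t\<in>{1..<Suc n}. frag_cmul ((-1)^t) (frag_of (a, merge_at t (pword js \<pi>), b)))
      + frag_cmul ((-1)^(Suc n)) (frag_of (a, map (\<lambda>k. unitv (js ! \<pi> k)) [0..<n], madd (unitv (js ! \<pi> n)) b))"
proof -
  have ne: "pword js \<pi> \<noteq> []" using assms by (simp add: pword_def)
  have hd: "hd (pword js \<pi>) = unitv (js ! \<pi> 0)"
    using assms by (simp add: pword_def upt_conv_Cons del: upt_Suc)
  have tl: "tl (pword js \<pi>) = map (\<lambda>k. unitv (js ! \<pi> (Suc k))) [0..<n]"
    using assms by (simp add: pword_def upt_conv_Cons map_Suc_upt[symmetric] del: upt_Suc)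
  have bl: "butlast (pword js \<pi>) = map (\<lambda>k. unitv (js ! \<pi> k)) [0..<n]" using assms by (simp add: pword_def)
  have la: "last (pword js \<pi>) = unitv (js ! \<pi> n)" using assms by (simp add: pword_def)
  have lw: "length (pword js \<pi>) = Suc n" using assms by (simp add: pword_def)
  show ?thesis unfolding dB_int_split[OF ne] hd tl bl la lw ..
qed

lemma interior_faces_cancel:
  assumes "length js = Suc n"
  shows "(\<Sum>\<pi>\<in>{\<pi>. \<pi> permutes {0..<Suc n}}. frag_cmul (sign \<pi>)
      (\<Sum>t\<in>{1..<Suc n}. frag_cmul ((-1)^t) (frag_of (a, merge_at t (pword js \<pi>), b)))) = 0"
proof -
  let ?P = "{\<pi>. \<pi> permutes {0..<Suc n}}"
  have "(\<Sum>\<pi>\<in>?P. frag_cmul (sign \<pi>) (\<Sum>t\<in>{1..<Suc n}. frag_cmul ((-1)^t) (frag_of (a, merge_at t (pword js \<pi>), b)))) =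
      (\<Sum>\<pi>\<in>?P. \<Sum>t\<in>{1..<Suc n}. frag_cmul ((-1)^t) (frag_cmul (sign \<pi>) (frag_of (a, merge_at t (pword js \<pi>), b))))"
    unfolding frag_cmul_sum by (intro sum.cong refl) (simp add: mult.commute)
  also have "\<dots> = (\<Sum>t\<in>{1..<Suc n}. frag_cmul ((-1)^t) (\<Sum>\<pi>\<in>?P. frag_cmul (sign \<pi>) (frag_of (a, merge_at t (pword js \<pi>), b))))"
    by (simp only: frag_cmul_sum sum.swap[of _ ?P])
  also have "\<dots> = 0"
    by (rule sum.neutral) (use interior_zero[where js=js] assms in auto)
  finally show ?thesis .
qed

text \<open>The integer Phi is a chain map: the first and last faces of the antisymmetrised word
  regroup, by the first or last letter, into Phi of the two faces of d.\<close>
lemma Phi_int_chain: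
  assumes "length js = Suc n"
  shows "frag_extend dB_int (Phi_int (a, js, b)) = frag_extend Phi_int (dK_int (a, js, b))"
proof -
  define P where "P = {\<pi>. \<pi> permutes {0..<Suc n}}"
  define F where "F \<pi> = frag_of (madd a (unitv (js ! \<pi> 0)), map (\<lambda>k. unitv (js ! \<pi> (Suc k))) [0..<n], b)" for \<pi>
  define L where "L \<pi> = frag_of (a, map (\<lambda>k. unitv (js ! \<pi> k)) [0..<n], madd (unitv (js ! \<pi> n)) b)" for \<pi>
  have "frag_extend dB_int (Phi_int (a, js, b)) = (\<Sum>\<pi>\<in>P. frag_cmul (sign \<pi>) (dB_int (a, pword js \<pi>, b)))"
    by (simp add: Phi_int_def P_def assms frag_extend_sum frag_extend_cmul comp_def finite_permutations)
  also have "\<dots> = (\<Sum>\<pi>\<in>P. frag_cmul (sign \<pi>) (F \<pi>))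
      + (\<Sum>\<pi>\<in>P. frag_cmul (sign \<pi>) (\<Sum>t\<in>{1..<Suc n}. frag_cmul ((-1)^t) (frag_of (a, merge_at t (pword js \<pi>), b))))
      + frag_cmul ((-1)^(Suc n)) (\<Sum>\<pi>\<in>P. frag_cmul (sign \<pi>) (L \<pi>))"
    unfolding dB_int_pword[OF assms] frag_cmul_distrib2 sum.distrib F_def L_def
    by (simp add: frag_cmul_sum mult.commute)
  also have "(\<Sum>\<pi>\<in>P. frag_cmul (sign \<pi>) (F \<pi>))
      = (\<Sum>i<Suc n. frag_cmul ((-1)^i) (Phi_int (madd a (unitv (js ! i)), del_at i js, b)))"
    using sum_perms_by_first[of "\<lambda>i ks. frag_of (madd a (unitv (js ! i)), map (\<lambda>k. unitv (js ! k)) ks, b)" n]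
    by (simp add: P_def F_def Phi_int_del_at assms comp_def)
  also have "frag_cmul ((-1)^(Suc n)) (\<Sum>\<pi>\<in>P. frag_cmul (sign \<pi>) (L \<pi>))
      = - (\<Sum>i<Suc n. frag_cmul ((-1)^i) (Phi_int (a, del_at i js, madd (unitv (js ! i)) b)))"
    using sum_perms_by_last[of "\<lambda>i ks. frag_of (a, map (\<lambda>k. unitv (js ! k)) ks, madd (unitv (js ! i)) b)" n]
    by (simp add: P_def L_def Phi_int_del_at assms comp_def)
  also have "(\<Sum>\<pi>\<in>P. frag_cmul (sign \<pi>) (\<Sum>t\<in>{1..<Suc n}. frag_cmul ((-1)^t) (frag_of (a, merge_at t (pword js \<pi>), b)))) = 0"
    unfolding P_def by (rule interior_faces_cancel[OF assms])
  also have "(\<Sum>i<Suc n. frag_cmul ((-1)^i) (Phi_int (madd a (unitv (js ! i)), del_at i js, b))) + 0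
      + - (\<Sum>i<Suc n. frag_cmul ((-1)^i) (Phi_int (a, del_at i js, madd (unitv (js ! i)) b)))
      = frag_extend Phi_int (dK_int (a, js, b))"
    unfolding dK_int_def prod.case assms frag_extend_sum[OF finite_lessThan] comp_def frag_extend_cmul
      frag_extend_diff frag_extend_of frag_cmul_diff2 sum_subtractf
    by simp
  finally show ?thesis .
qed

section \<open>The integer Psi inverts Phi on the left\<close>

lemma psi1_unitv: "psi1 j (unitv u) = (if j = u then frag_of (mzero, [u], mzero) else 0)"
proof (cases "j = u")
  case True
  have "Qleft (unitv u) u 0 = mzero" "Qright (unitv u) u 0 = mzero"
    by (auto simp: Qleft_def Qright_def unitv_def mzero_def fun_eq_iff)
  then show ?thesis using True by (simp add: psi1_def unitv_def)
next
  case False then show ?thesis by (simp add: psi1_def unitv_def)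
qed

lemma psiseq_units:
  "psiseq N (map unitv us) lo = (if sorted_wrt (<) us \<and> set us \<subseteq> {lo<..N} then frag_of (mzero, us, mzero) else 0)"
proof (induction us arbitrary: lo)
  case Nil then show ?case by (simp add: kunit_def)
next
  case (Cons u us)
  have "psiseq N (map unitv (u # us)) lo = (\<Sum>j\<in>{lo<..N}. if j = u then kmul (frag_of (mzero, [u], mzero)) (psiseq N (map unitv us) j) else 0)"
    by (simp only: list.map psiseq.simps) (intro sum.cong refl, simp add: psi1_unitv)
  also have "\<dots> = (if u \<in> {lo<..N} then kmul (frag_of (mzero, [u], mzero)) (psiseq N (map unitv us) u) else 0)"
    by (simp add: sum.delta')
  also have "\<dots> = (if sorted_wrt (<) (u # us) \<and> set (u # us) \<subseteq> {lo<..N} then frag_of (mzero, u # us, mzero) else 0)"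
    unfolding Cons.IH by (auto simp: subset_iff)
  finally show ?case .
qed

lemma perm_sorted_id:
  fixes js :: "nat list"
  assumes "sorted_wrt (<) js" "\<pi> permutes {0..<length js}" "sorted_wrt (<) (map (\<lambda>k. js ! \<pi> k) [0..<length js])"
  shows "\<pi> = id"
proof -
  define p where "p = length js"
  have d: "distinct js" "sorted js" using assms(1) by (auto simp: strict_sorted_iff)
  have d2: "distinct (map (\<lambda>k. js ! \<pi> k) [0..<p])" "sorted (map (\<lambda>k. js ! \<pi> k) [0..<p])"
    using assms(3) by (auto simp: strict_sorted_iff p_def)
  have "set (map (\<lambda>k. js ! \<pi> k) [0..<p]) = (\<lambda>k. js ! k) ` (\<pi> ` {0..<p})" by auto
  also have "\<pi> ` {0..<p} = {0..<p}" using assms(2) by (simp add: permutes_image p_def)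
  also have "(\<lambda>k. js ! k) ` {0..<p} = set js" by (auto simp: p_def in_set_conv_nth)
  finally have "map (\<lambda>k. js ! \<pi> k) [0..<p] = js"
    using sorted_distinct_set_unique[OF d2(2) d2(1) d(2) d(1)] by simp
  then have e: "\<And>k. k < p \<Longrightarrow> js ! \<pi> k = js ! k"
    by (metis (no_types, lifting) add_0 diff_zero nth_map_upt p_def length_map length_upt)
  show ?thesis
  proof
    fix k show "\<pi> k = id k"
    proof (cases "k < p")
      case True
      have "\<pi> k < p" using True assms(2) by (auto simp: p_def dest: permutes_in_image)
      then show ?thesis using e[OF True] True d(1) by (simp add: nth_eq_iff_index_eq p_def)
    next
      case False then show ?thesis using assms(2) by (simp add: permutes_not_in p_def)
    qed
  qed
qed

lemma Psi_Phi_int: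
  assumes "sorted_wrt (<) js" "set js \<subseteq> {1..N}"
  shows "frag_extend (Psi_int N) (Phi_int (a, js, b)) = frag_of (a, js, b)"
proof -
  define P where "P = {\<pi>. \<pi> permutes {0..<length js}}"
  have tm: "frag_cmul (sign \<pi>) (Psi_int N (a, pword js \<pi>, b)) = (if \<pi> = id then frag_of (a, js, b) else 0)"
    if "\<pi> \<in> P" for \<pi>
  proof -
    have pword: "pword js \<pi> = map unitv (map (\<lambda>k. js ! \<pi> k) [0..<length js])" by (simp add: pword_def)
    show ?thesis
    proof (cases "\<pi> = id")
      case True
      have pwid: "pword js id = map unitv js" by (rule nth_equalityI) (simp_all add: pword_def)
      have "set js \<subseteq> {0<..N}" using assms(2) by auto
      then show ?thesis using True assms(1)
        by (simp add: Psi_int_eq pwid psiseq_units bact_of)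
    next
      case False
      then have "\<not> sorted_wrt (<) (map (\<lambda>k. js ! \<pi> k) [0..<length js])"
        using perm_sorted_id[OF assms(1)] that by (auto simp: P_def)
      then show ?thesis using False by (simp only: Psi_int_eq pword psiseq_units) (simp add: bact_def)
    qed
  qed
  have "frag_extend (Psi_int N) (Phi_int (a, js, b)) = (\<Sum>\<pi>\<in>P. frag_cmul (sign \<pi>) (Psi_int N (a, pword js \<pi>, b)))"
    by (simp add: Phi_int_def P_def frag_extend_sum frag_extend_cmul comp_def finite_permutations)
  also have "\<dots> = (\<Sum>\<pi>\<in>P. if \<pi> = id then frag_of (a, js, b) else 0)"
    by (rule sum.cong[OF refl]) (rule tm)
  also have "\<dots> = frag_of (a, js, b)"
    by (simp add: sum.delta P_def permutes_id finite_permutations)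
  finally show ?thesis .
qed

lemma unitv_expvecs: "u \<in> {1..N} \<Longrightarrow> unitv u \<in> expvecs N"
  by (auto simp: unitv_def expvecs_def)

lemma unitv_nz: "unitv u \<noteq> mzero"
  by (metis mzero_def one_neq_zero unitv_def)

lemma keys_Phi_int:
  assumes "(a, js, b) \<in> Kbasis N p"
  shows "Poly_Mapping.keys (Phi_int (a, js, b)) \<subseteq> Bbasis N p"
proof -
  have A: "a \<in> expvecs N" "b \<in> expvecs N" "length js = p" "set js \<subseteq> {1..N}"
    using assms by (auto simp: Kbasis_def)
  have "Poly_Mapping.keys (Phi_int (a, js, b)) \<subseteq> (\<Union>\<pi>\<in>{\<pi>. \<pi> permutes {0..<length js}}. Poly_Mapping.keys (frag_cmul (sign \<pi>) (frag_of (a, pword js \<pi>, b))))"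
    unfolding Phi_int_def prod.case by (rule keys_sum)
  also have "\<dots> \<subseteq> (\<Union>\<pi>\<in>{\<pi>. \<pi> permutes {0..<length js}}. {(a, pword js \<pi>, b)})"
    by (intro UN_mono order_refl) (metis keys_cmul keys_frag_of)
  also have "\<dots> \<subseteq> Bbasis N p"
  proof (rule UN_least)
    fix \<pi> assume "\<pi> \<in> {\<pi>. \<pi> permutes {0..<length js}}"
    then have p: "\<pi> permutes {0..<length js}" by simp
    have all: "\<forall>l\<in>set (pword js \<pi>). l \<in> expvecs N \<and> l \<noteq> mzero"
    proof
      fix l assume "l \<in> set (pword js \<pi>)"
      then obtain k where k: "k < length js" "l = unitv (js ! \<pi> k)" by (auto simp: pword_def)
      have "\<pi> k < length js" using k(1) p by (auto dest: permutes_in_image)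
      then have "js ! \<pi> k \<in> {1..N}" using A(4) nth_mem by blast
      then show "l \<in> expvecs N \<and> l \<noteq> mzero" using k by (simp add: unitv_expvecs unitv_nz)
    qed
    have len: "length (pword js \<pi>) = p" using A(3) by (simp add: pword_def)
    show "{(a, pword js \<pi>, b)} \<subseteq> Bbasis N p" unfolding Bbasis_def using A(1,2) len all by blast
  qed
  finally show ?thesis .
qed

lemma keys_kmul: "Poly_Mapping.keys (kmul u v) \<subseteq> {kcat x y | x y. x \<in> Poly_Mapping.keys u \<and> y \<in> Poly_Mapping.keys v}"
proof
  fix z assume z: "z \<in> Poly_Mapping.keys (kmul u v)"
  have "z \<in> (\<Union>x\<in>Poly_Mapping.keys u. Poly_Mapping.keys (frag_extend (\<lambda>y. frag_of (kcat x y)) v))"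
    using subsetD[OF keys_frag_extend z[unfolded kmul_def]] .
  then obtain x where x: "x \<in> Poly_Mapping.keys u" "z \<in> Poly_Mapping.keys (frag_extend (\<lambda>y. frag_of (kcat x y)) v)"
    by (rule UN_E)
  have "z \<in> (\<Union>y\<in>Poly_Mapping.keys v. Poly_Mapping.keys (frag_of (kcat x y)))"
    using subsetD[OF keys_frag_extend x(2)] .
  then obtain y where y: "y \<in> Poly_Mapping.keys v" "z \<in> Poly_Mapping.keys (frag_of (kcat x y))"
    by (rule UN_E)
  have "z = kcat x y" using y(2) by simp
  then show "z \<in> {kcat x y | x y. x \<in> Poly_Mapping.keys u \<and> y \<in> Poly_Mapping.keys v}" using x(1) y(1) by blast
qed

lemma madd_expvecs: "a \<in> expvecs N \<Longrightarrow> b \<in> expvecs N \<Longrightarrow> madd a b \<in> expvecs N"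
  by (auto simp: expvecs_def madd_def)

lemma mzero_expvecs: "mzero \<in> expvecs N" by (simp add: expvecs_def mzero_def)

lemma Qleft_expvecs:
  assumes l: "l \<in> expvecs N" and j: "j \<in> {1..N}"
  shows "Qleft l j r \<in> expvecs N"
  unfolding expvecs_def mem_Collect_eq
proof (intro allI impI)
  fix k assume k: "k \<notin> {1..N}"
  then have "k \<noteq> j" using j by blast
  moreover have "l k = 0" using l k by (simp add: expvecs_def)
  ultimately show "Qleft l j r k = 0" by (simp add: Qleft_def)
qed

lemma Qright_expvecs:
  assumes l: "l \<in> expvecs N" and j: "j \<in> {1..N}"
  shows "Qright l j r \<in> expvecs N"
  unfolding expvecs_def mem_Collect_eq
proof (intro allI impI)
  fix k assume k: "k \<notin> {1..N}"
  then have "k \<noteq> j" using j by blast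
  moreover have "l k = 0" using l k by (simp add: expvecs_def)
  ultimately show "Qright l j r k = 0" by (simp add: Qright_def)
qed

definition kbasis_from :: "nat \<Rightarrow> nat \<Rightarrow> nat \<Rightarrow> kb set" where
  "kbasis_from N lo p = {(c, J, d). c \<in> expvecs N \<and> d \<in> expvecs N \<and> length J = p \<and> sorted_wrt (<) J \<and> set J \<subseteq> {lo<..N}}"

lemma keys_psi1_elem:
  assumes "y \<in> Poly_Mapping.keys (psi1 j l)"
  obtains r where "y = (Qleft l j r, [j], Qright l j r)"
proof -
  have "y \<in> (\<Union>r\<in>{..<l j}. Poly_Mapping.keys (frag_of (Qleft l j r, [j], Qright l j r)))"
    using subsetD[OF keys_sum assms[unfolded psi1_def]] .
  then obtain r where "y \<in> Poly_Mapping.keys (frag_of (Qleft l j r, [j], Qright l j r))"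
    by (rule UN_E)
  then show ?thesis using that by simp
qed

lemma keys_psiseq:
  "set ls \<subseteq> expvecs N \<Longrightarrow> Poly_Mapping.keys (psiseq N ls lo) \<subseteq> kbasis_from N lo (length ls)"
proof (induction ls arbitrary: lo)
  case Nil then show ?case by (simp add: kunit_def kbasis_from_def mzero_expvecs)
next
  case (Cons l ls)
  have lE: "l \<in> expvecs N" using Cons.prems by simp
  show ?case
  proof
    fix x assume "x \<in> Poly_Mapping.keys (psiseq N (l # ls) lo)"
    then obtain j where j: "j \<in> {lo<..N}" "x \<in> Poly_Mapping.keys (kmul (psi1 j l) (psiseq N ls j))"
      using keys_sum[of "\<lambda>j. kmul (psi1 j l) (psiseq N ls j)" "{lo<..N}"] by auto
    then obtain y z where yz: "x = kcat y z" "y \<in> Poly_Mapping.keys (psi1 j l)" "z \<in> Poly_Mapping.keys (psiseq N ls j)"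
      using keys_kmul by blast
    obtain r where y: "y = (Qleft l j r, [j], Qright l j r)" using keys_psi1_elem[OF yz(2)] .
    have z: "z \<in> kbasis_from N j (length ls)" using Cons.IH Cons.prems yz(3) by auto
    obtain c J d where zz: "z = (c, J, d)" by (cases z) auto
    have jr: "j \<in> {1..N}" using j by auto
    have "Qleft l j r \<in> expvecs N" "Qright l j r \<in> expvecs N"
      using Qleft_expvecs[OF lE jr] Qright_expvecs[OF lE jr] .
    then show "x \<in> kbasis_from N lo (length (l # ls))"
      using z j unfolding yz(1) y zz kbasis_from_def by (auto simp: madd_expvecs)
  qed
qed

lemma keys_Psi_int:
  assumes "(a, ls, b) \<in> Bbasis N p"
  shows "Poly_Mapping.keys (Psi_int N (a, ls, b)) \<subseteq> Kbasis N p"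
proof
  have ls: "set ls \<subseteq> expvecs N" "length ls = p" "a \<in> expvecs N" "b \<in> expvecs N"
    using assms by (auto simp: Bbasis_def)
  fix x assume "x \<in> Poly_Mapping.keys (Psi_int N (a, ls, b))"
  then obtain y z where yz: "x = kcat y z" "y \<in> Poly_Mapping.keys (frag_of (a, [], mzero))"
      "z \<in> Poly_Mapping.keys (kmul (psiseq N ls 0) (frag_of (mzero, [], b)))"
    unfolding Psi_int_eq bact_def using keys_kmul by blast
  obtain u w where uw: "z = kcat u w" "u \<in> Poly_Mapping.keys (psiseq N ls 0)" "w \<in> Poly_Mapping.keys (frag_of (mzero, [], b))"
    using yz(3) keys_kmul by blast
  have u: "u \<in> kbasis_from N 0 p" using keys_psiseq[OF ls(1)] uw(2) ls(2) by auto
  obtain c J d where uu: "u = (c, J, d)" by (cases u) auto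
  have "y = (a, [], mzero)" "w = (mzero, [], b)" using yz(2) uw(3) by auto
  then show "x \<in> Kbasis N p"
    using u ls unfolding yz(1) uw(1) uu kbasis_from_def Kbasis_def by (auto simp: madd_expvecs)
qed

section \<open>Transfer to the q-deformed maps\<close>

context qparams
begin

lemma Phi_preserves_basis: "vecs (Kbasis N p) v \<Longrightarrow> vecs (Bbasis N p) (Phi q N v)"
  unfolding Phi_lin
proof (rule vecs_lin_ext_twist[where F=Phi_int])
  fix x assume "x \<in> Kbasis N p"
  then show "Poly_Mapping.keys (Phi_int x) \<subseteq> Bbasis N p" by (cases x) (metis keys_Phi_int)
qed (simp_all add: Phi_on_twist)

lemma Psi_preserves_basis: "vecs (Bbasis N p) v \<Longrightarrow> vecs (Kbasis N p) (Psi q N v)"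
  unfolding Psi_lin
proof (rule vecs_lin_ext_twist[where F="Psi_int N"])
  fix x assume "x \<in> Bbasis N p"
  then show "Poly_Mapping.keys (Psi_int N x) \<subseteq> Kbasis N p" by (cases x) (metis keys_Psi_int)
qed (simp_all add: Psi_on_twist)

text \<open>In degree 0 both maps are the identity, so they commute with the augmentations.\<close>
lemma Phi_augmentation:
  assumes "vecs (Kbasis N 0) v"
  shows "epsB q N (Phi q N v) = epsK q N v"
proof -
  have fs: "finite (supp v)" using assms by (simp add: vecs_def)
  have "epsB q N (Phi q N v) = lin_ext (\<lambda>x. epsB q N (Phi_on x)) v"
    unfolding Phi_lin epsB_def by (rule lin_ext_comp[OF fs]) (simp add: Phi_on_twist finite_supp_twist)
  also have "\<dots> = epsK q N v"
    unfolding epsK_def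
  proof (rule lin_ext_cong)
    fix x assume "x \<in> supp v"
    then have "x \<in> Kbasis N 0" using assms by (auto simp: vecs_def)
    then obtain a b where x: "x = (a, [], b)" by (auto simp: Kbasis_def)
    show "epsB q N (Phi_on x) = (case x of (a, js, b) \<Rightarrow> amul q N (mon a) (mon b))"
      unfolding x Phi_on_nil epsB_def lin_ext_vsingle by simp
  qed
  finally show ?thesis .
qed

lemma Psi_augmentation:
  assumes "vecs (Bbasis N 0) v"
  shows "epsK q N (Psi q N v) = epsB q N v"
proof -
  have fs: "finite (supp v)" using assms by (simp add: vecs_def)
  have "epsK q N (Psi q N v) = lin_ext (\<lambda>x. epsK q N (Psi_on x)) v"
    unfolding Psi_lin epsK_def by (rule lin_ext_comp[OF fs]) (simp add: Psi_on_twist finite_supp_twist)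
  also have "\<dots> = epsB q N v"
    unfolding epsB_def
  proof (rule lin_ext_cong)
    fix x assume "x \<in> supp v"
    then have "x \<in> Bbasis N 0" using assms by (auto simp: vecs_def)
    then obtain a b where x: "x = (a, [], b)" by (auto simp: Bbasis_def)
    show "epsK q N (Psi_on x) = (case x of (a, js, b) \<Rightarrow> amul q N (mon a) (mon b))"
      unfolding x Psi_on_nil epsK_def lin_ext_vsingle by simp
  qed
  finally show ?thesis .
qed

lemma dK_on_twist_basis: "x \<in> Kbasis N p \<Longrightarrow> dK_on x = twist wK wK x (dK_int x)"
  by (auto simp: Kbasis_def dK_on_twist)

lemma dB_on_twist_basis:
  assumes "1 \<le> p" "y \<in> Bbasis N p"
  shows "dB_on y = twist wB wB y (dB_int y)"
proof -
  obtain c ls d where y: "y = (c, ls, d)" "length ls = p" using assms(2) by (auto simp: Bbasis_def)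
  then have "ls \<noteq> []" using assms(1) by auto
  then show ?thesis unfolding y(1) by (rule dB_on_twist)
qed

lemma Phi_chain:
  assumes "1 \<le> p" "vecs (Kbasis N p) v"
  shows "deltaB q N (Phi q N v) = Phi q N (dK q N v)"
proof -
  have fs: "finite (supp v)" and xK: "\<And>x. x \<in> supp v \<Longrightarrow> x \<in> Kbasis N p"
    using assms(2) by (auto simp: vecs_def)
  have "deltaB q N (Phi q N v) = lin_ext (\<lambda>x. twist wK wB x (frag_extend dB_int (Phi_int x))) v"
    unfolding dB_lin Phi_lin
  proof (rule lin_ext_comp_twist[OF fs])
    fix x y assume "x \<in> supp v" "y \<in> Poly_Mapping.keys (Phi_int x)"
    then have "y \<in> Bbasis N p" using xK keys_Phi_int by (cases x) blast
    then show "dB_on y = twist wB wB y (dB_int y)" by (rule dB_on_twist_basis[OF assms(1)])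
  qed (simp_all add: Phi_on_twist wB_nz)
  also have "\<dots> = lin_ext (\<lambda>x. twist wK wB x (frag_extend Phi_int (dK_int x))) v"
  proof (rule lin_ext_cong)
    fix x assume "x \<in> supp v"
    then obtain a js b where x: "x = (a, js, b)" "length js = p"
      using xK by (cases x) (auto simp: Kbasis_def)
    obtain n where n: "length js = Suc n" using x(2) assms(1) by (cases p) auto
    show "twist wK wB x (frag_extend dB_int (Phi_int x)) = twist wK wB x (frag_extend Phi_int (dK_int x))"
      unfolding x(1) Phi_int_chain[OF n] ..
  qed
  also have "\<dots> = Phi q N (dK q N v)"
    unfolding dK_lin Phi_lin
    by (rule lin_ext_comp_twist[OF fs, symmetric]) (auto simp: dK_on_twist_basis[OF xK] Phi_on_twist wK_nz)
  finally show ?thesis .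
qed

lemma Psi_chain:
  assumes "1 \<le> p" "vecs (Bbasis N p) v"
  shows "dK q N (Psi q N v) = Psi q N (deltaB q N v)"
proof -
  have fs: "finite (supp v)" and yB: "\<And>y. y \<in> supp v \<Longrightarrow> y \<in> Bbasis N p"
    using assms(2) by (auto simp: vecs_def)
  have "dK q N (Psi q N v) = lin_ext (\<lambda>y. twist wB wK y (frag_extend dK_int (Psi_int N y))) v"
    unfolding dK_lin Psi_lin
  proof (rule lin_ext_comp_twist[OF fs])
    fix y x assume "y \<in> supp v" "x \<in> Poly_Mapping.keys (Psi_int N y)"
    then have "x \<in> Kbasis N p" using yB keys_Psi_int by (cases y) blast
    then show "dK_on x = twist wK wK x (dK_int x)" by (rule dK_on_twist_basis)
  qed (simp_all add: Psi_on_twist wK_nz)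
  also have "\<dots> = lin_ext (\<lambda>y. twist wB wK y (frag_extend (Psi_int N) (dB_int y))) v"
  proof (rule lin_ext_cong)
    fix y assume "y \<in> supp v"
    obtain a ls b where y: "y = (a, ls, b)" by (cases y)
    then have "length ls = p" "set ls \<subseteq> expvecs N"
      using yB[OF \<open>y \<in> supp v\<close>] by (auto simp: Bbasis_def)
    moreover have "ls \<noteq> []" using \<open>length ls = p\<close> assms(1) by auto
    ultimately show "twist wB wK y (frag_extend dK_int (Psi_int N y)) = twist wB wK y (frag_extend (Psi_int N) (dB_int y))"
      unfolding y by (simp add: Psi_int_chain)
  qed
  also have "\<dots> = Psi q N (deltaB q N v)"
    unfolding dB_lin Psi_lin
    by (rule lin_ext_comp_twist[OF fs, symmetric])
       (auto simp: dB_on_twist_basis[OF assms(1)] yB Psi_on_twist wB_nz)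
  finally show ?thesis .
qed

lemma Psi_Phi_id:
  assumes "vecs (Kbasis N p) v"
  shows "Psi q N (Phi q N v) = v"
proof -
  have fs: "finite (supp v)" and xK: "\<And>x. x \<in> supp v \<Longrightarrow> x \<in> Kbasis N p"
    using assms by (auto simp: vecs_def)
  have "Psi q N (Phi q N v) = lin_ext (\<lambda>x. twist wK wK x (frag_extend (Psi_int N) (Phi_int x))) v"
    unfolding Psi_lin Phi_lin
    by (rule lin_ext_comp_twist[OF fs]) (auto simp: Phi_on_twist Psi_on_twist wB_nz)
  also have "\<dots> = lin_ext (\<lambda>x. vsingle x 1) v"
  proof (rule lin_ext_cong)
    fix x assume "x \<in> supp v"
    then obtain a js b where x: "x = (a, js, b)" "sorted_wrt (<) js" "set js \<subseteq> {1..N}"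
      using xK by (cases x) (auto simp: Kbasis_def)
    show "twist wK wK x (frag_extend (Psi_int N) (Phi_int x)) = vsingle x 1"
      unfolding x(1) Psi_Phi_int[OF x(2,3)] by (rule twist_of[OF refl], rule wK_nz)
  qed
  also have "\<dots> = v" by (rule lin_ext_single_id[OF fs])
  finally show ?thesis .
qed

end

theorem mainTheorem4:
  fixes q :: "nat \<Rightarrow> nat \<Rightarrow> 'k::field" and N :: nat
  assumes "\<forall>i\<in>{1..N}. \<forall>j\<in>{1..N}. q i j \<noteq> 0"
    and "\<forall>i\<in>{1..N}. q i i = 1"
    and "\<forall>i\<in>{1..N}. \<forall>j\<in>{1..N}. q j i = inverse (q i j)"
  shows
    "((\<forall>p v. vecs (Kbasis N p) v \<longrightarrow> vecs (Bbasis N p) (Phi q N v))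
      \<and> (\<forall>v. vecs (Kbasis N 0) v \<longrightarrow> epsB q N (Phi q N v) = epsK q N v)
      \<and> (\<forall>p\<ge>1. \<forall>v. vecs (Kbasis N p) v \<longrightarrow> deltaB q N (Phi q N v) = Phi q N (dK q N v)))
   \<and> ((\<forall>p v. vecs (Bbasis N p) v \<longrightarrow> vecs (Kbasis N p) (Psi q N v))
      \<and> (\<forall>v. vecs (Bbasis N 0) v \<longrightarrow> epsK q N (Psi q N v) = epsB q N v)
      \<and> (\<forall>p\<ge>1. \<forall>v. vecs (Bbasis N p) v \<longrightarrow> dK q N (Psi q N v) = Psi q N (deltaB q N v)))
   \<and> (\<forall>p v. vecs (Kbasis N p) v \<longrightarrow> Psi q N (Phi q N v) = v)"
proof -
  interpret qparams q N using assms by unfold_locales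
  note Phi_lifts_id = Phi_preserves_basis Phi_augmentation Phi_chain
  note Psi_lifts_id = Psi_preserves_basis Psi_augmentation Psi_chain
  show ?thesis using Phi_lifts_id Psi_lifts_id Psi_Phi_id by blast
qed

end
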